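(* Let $D\subset\mathscr C^r(\mathbb{S}^1)$ be a bounded open set and fix $R>0$ with $R>\|\tau'\|_\infty$ for all $\tau\in D$. Fix $\rho>0$, intervals $I_j=(a_j,b_j)$, $1\le j\le J$, covering $[\log\lambda,\log\Lambda]$ with $b_j-a_j<\rho/3$, $N=\lceil6\rho^{-1}\log\lceil2\Lambda\rceil\rceil$, and an integer $q\ge1$ with $(q+1)Ne^{-q\rho/2}<1/(4J)$. Let $\varphi_1,\dots,\varphi_m\in\mathscr C^\infty(\mathbb{S}^1)$ be functions satisfying the conclusion of Proposition 3.4 with $p=N$, $\nu=q$ (i.e. for any $x$ and $B\subset\mathcal A^q$ with $\#B\ge N(q+1)$ there is $B'\subset B$, $\#B'=N$, with $\operatorname{Jac}(G_{x,A})\ge1$ whenever $A\subset\mathcal A^n$, $n\ge q$, and $\alpha\mapsto[\alpha]_q$ is a bijection $A\to B'$). Then for every $\tau\in D$, with $\tau_{\mathbf t}=\tau+\sum_{i=1}^mt_i\varphi_i$, $\operatorname{Leb}_{\mathbb{R}^m}\{\mathbf t\in[-1,1]^m:\ \tau_{\mathbf t}\in X(n)\text{ for infinitely many }n\}=0.$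
   Context: $\mathbb{S}^1=\mathbb{R}/\mathbb{Z}$, $r\ge2$; $E:\mathbb{S}^1\to\mathbb{S}^1$ is a $\mathscr C^r$ expanding map of degree $\ell\ge2$ with $1<\lambda\le E'\le\Lambda$ and $0$ a fixed point; $\vartheta_R=R/(\lambda-1)$. Symbolic coding: $\mathcal A=\{0,\dots,\ell-1\}$; the $\ell$ points of $E^{-1}(0)$ divide $\mathbb{S}^1$ into half-open intervals $\mathcal I(j)$ each mapped bijectively onto $\mathbb{S}^1$ by $E$; for $\alpha=(\alpha_n,\dots,\alpha_1)\in\mathcal A^n$, $\mathcal I(\alpha)=\bigcap_{i=0}^{n-1}E^{-i}(\mathcal I(\alpha_{n-i}))$, $x_\alpha$ the unique point of $\mathcal I(\alpha)$ with $E^n(x_\alpha)=x$, $[\alpha]_k=(\alpha_k,\dots,\alpha_1)$. $S_n(x;\alpha;\tau)=\sum_{k=1}^n\tau'(x_{[\alpha]_k})/(E^k)'(x_{[\alpha]_k})$. $G_{x,A}(\mathbf t)=(S_n(x;\alpha;\tau_{\mathbf t}))_{\alpha\in A}$ for $A\subset\mathcal A^n$, and $\operatorname{Jac}$ of an affine map is the absolute Jacobian determinant of its linear part restricted to the orthogonal complement of its kernel if surjective, $0$ otherwise. Let $T(n)=\{x\in\mathbb{S}^1:\lceil2\Lambda\rceil^nx\in\mathbb{Z}\}$ and $\Theta(n)=\{\theta\in[0,2\pi):\lceil2\Lambda\rceil^n\theta/(2\pi)\in\mathbb{Z}\}$. $X(n)$ is the set of $\tau\in D$ for which there exist $x\in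 T(n)$, $\theta\in\Theta(n)$ with $\cos\theta\neq0$, $1\le j\le J$, a set $B\subset\mathcal A^q$ with $\#B=2(q+1)N$, and sets $\Sigma(\beta)\subset\mathcal A^n$ for $\beta\in B$ with $\#\Sigma(\beta)\ge e^{\rho n}\ell^{-q}/(2J)$, such that for all $\beta\in B$ and $\alpha\in\Sigma(\beta)$: $[\alpha]_q=\beta$, $(E^n)'(x_\alpha)\in[e^{a_jn},e^{b_jn}]$, and $|S_n(x;\alpha;\tau)-\tan\theta|\le e^{-a_jn}\vartheta_R$. *)

theory Defs
  imports "HOL-Analysis.Analysis" "HOL-Combinatorics.Permutations"
begin

text \<open>Points of the circle R/Z are represented by reals (representatives in [0,1));
functions on the circle by 1-periodic real functions.\<close>

definition periodic1 :: "(real \<Rightarrow> real) \<Rightarrow> bool" where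
  "periodic1 f \<longleftrightarrow> (\<forall>x. f (x + 1) = f x)"

definition Ck :: "nat \<Rightarrow> (real \<Rightarrow> real) \<Rightarrow> bool" where
  "Ck k f \<longleftrightarrow>
     (\<forall>j<k. \<forall>x. ((deriv ^^ j) f has_real_derivative (deriv ^^ Suc j) f x) (at x))
     \<and> continuous_on UNIV ((deriv ^^ k) f)"

definition Cr_circle :: "nat \<Rightarrow> (real \<Rightarrow> real) \<Rightarrow> bool" where
  "Cr_circle k f \<longleftrightarrow> Ck k f \<and> periodic1 f"

definition Cinf_circle :: "(real \<Rightarrow> real) \<Rightarrow> bool" where
  "Cinf_circle f \<longleftrightarrow> (\<forall>k. Cr_circle k f)"

definition cr_norm :: "nat \<Rightarrow> (real \<Rightarrow> real) \<Rightarrow> real" where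
  "cr_norm k f = (\<Sum>j\<le>k. (SUP x. \<bar>(deriv ^^ j) f x\<bar>))"

definition cr_open :: "nat \<Rightarrow> (real \<Rightarrow> real) set \<Rightarrow> bool" where
  "cr_open k D \<longleftrightarrow> D \<subseteq> {f. Cr_circle k f} \<and>
     (\<forall>f\<in>D. \<exists>e>0. \<forall>g. Cr_circle k g \<and> cr_norm k (\<lambda>y. g y - f y) < e \<longrightarrow> g \<in> D)"

definition cr_bounded :: "nat \<Rightarrow> (real \<Rightarrow> real) set \<Rightarrow> bool" where
  "cr_bounded k D \<longleftrightarrow> (\<exists>M. \<forall>f\<in>D. cr_norm k f \<le> M)"

text \<open>E given by its lift El : R -> R, El(x+1) = El x + l (degree l), C^r,
  with lam <= E' <= Lam, 1 < lam, and 0 a fixed point (El 0 integer).\<close>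
definition expanding_map :: "nat \<Rightarrow> nat \<Rightarrow> real \<Rightarrow> real \<Rightarrow> (real \<Rightarrow> real) \<Rightarrow> bool" where
  "expanding_map r l lam Lam El \<longleftrightarrow>
     Ck r El \<and> (\<forall>x. El (x + 1) = El x + real l) \<and> El 0 \<in> \<int> \<and> 1 < lam \<and>
     (\<forall>x. lam \<le> deriv El x \<and> deriv El x \<le> Lam)"

text \<open>Inverse branch: the unique point of the interval I(j) mapped by E to x.
  I(j) is the half-open interval [y_j, y_(j+1)) where y_0 = 0 < y_1 < ... are the
  preimages of 0 in [0,1), El(y_j) = El 0 + j.\<close>
definition branch :: "(real \<Rightarrow> real) \<Rightarrow> nat \<Rightarrow> real \<Rightarrow> real" where
  "branch El j x = (THE y. El y = El 0 + real j + frac x)"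

text \<open>Words alpha = (alpha_n, ..., alpha_1) are lists in this order.\<close>
fun pt :: "(real \<Rightarrow> real) \<Rightarrow> real \<Rightarrow> nat list \<Rightarrow> real" where
  "pt El x [] = x"
| "pt El x (a # as) = branch El a (pt El x as)"

definition words :: "nat \<Rightarrow> nat \<Rightarrow> nat list set" where
  "words l n = {\<alpha>. length \<alpha> = n \<and> set \<alpha> \<subseteq> {..<l}}"

definition trunc :: "nat \<Rightarrow> nat list \<Rightarrow> nat list" where
  "trunc k \<alpha> = drop (length \<alpha> - k) \<alpha>"

definition Sn :: "(real \<Rightarrow> real) \<Rightarrow> real \<Rightarrow> nat list \<Rightarrow> (real \<Rightarrow> real) \<Rightarrow> real" where
  "Sn El x \<alpha> \<tau> = (\<Sum>k=1..length \<alpha>.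
      deriv \<tau> (pt El x (trunc k \<alpha>)) / deriv (El ^^ k) (pt El x (trunc k \<alpha>)))"

definition perturb :: "(real \<Rightarrow> real) \<Rightarrow> ('m::finite \<Rightarrow> real \<Rightarrow> real) \<Rightarrow> real^'m \<Rightarrow> real \<Rightarrow> real" where
  "perturb \<tau> \<phi> t = (\<lambda>y. \<tau> y + (\<Sum>i\<in>UNIV. t $ i * \<phi> i y))"

text \<open>G_{x,A}(t) = (S_n(x;alpha;tau_t))_{alpha in A}, as a function vanishing off A.\<close>
definition Gmap :: "(real \<Rightarrow> real) \<Rightarrow> real \<Rightarrow> nat list set \<Rightarrow> (real \<Rightarrow> real)
     \<Rightarrow> ('m::finite \<Rightarrow> real \<Rightarrow> real) \<Rightarrow> real^'m \<Rightarrow> nat list \<Rightarrow> real" where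
  "Gmap El x A \<tau> \<phi> t = (\<lambda>\<alpha>. if \<alpha> \<in> A then Sn El x \<alpha> (perturb \<tau> \<phi> t) else 0)"

definition det_on :: "'a set \<Rightarrow> ('a \<Rightarrow> 'a \<Rightarrow> real) \<Rightarrow> real" where
  "det_on A g = (\<Sum>p | p permutes A. of_int (sign p) * (\<Prod>a\<in>A. g a (p a)))"

text \<open>Jacobian of an affine map G : R^m -> R^A (linear part L v = G v - G 0):
  if L is surjective, |det| of L restricted to (ker L)^perp, i.e. sqrt(det(L L^T));
  otherwise 0.\<close>
definition jac_aff :: "'a set \<Rightarrow> (real^'m::finite \<Rightarrow> 'a \<Rightarrow> real) \<Rightarrow> real" where
  "jac_aff A G =
     (let L = (\<lambda>v a. G v a - G 0 a) in
      if (\<forall>w. \<exists>v. \<forall>a\<in>A. L v a = w a)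
      then sqrt (det_on A (\<lambda>a b. \<Sum>i\<in>UNIV. L (axis i 1) a * L (axis i 1) b))
      else 0)"

definition Tset :: "real \<Rightarrow> nat \<Rightarrow> real set" where
  "Tset Lam n = {x \<in> {0..<1}. of_int \<lceil>2 * Lam\<rceil> ^ n * x \<in> \<int>}"

definition Thset :: "real \<Rightarrow> nat \<Rightarrow> real set" where
  "Thset Lam n = {\<theta> \<in> {0..<2*pi}. of_int \<lceil>2 * Lam\<rceil> ^ n * \<theta> / (2 * pi) \<in> \<int>}"

definition Xset :: "(real \<Rightarrow> real) \<Rightarrow> nat \<Rightarrow> real \<Rightarrow> real \<Rightarrow> (real \<Rightarrow> real) set \<Rightarrow> real
     \<Rightarrow> real \<Rightarrow> nat \<Rightarrow> (nat \<Rightarrow> real) \<Rightarrow> (nat \<Rightarrow> real) \<Rightarrow> nat \<Rightarrow> nat \<Rightarrow> nat \<Rightarrow> (real \<Rightarrow> real) set" where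
  "Xset El l lam Lam D R rho J a b q N n =
     {\<tau> \<in> D. \<exists>x\<in>Tset Lam n. \<exists>\<theta>\<in>Thset Lam n. cos \<theta> \<noteq> 0 \<and>
        (\<exists>j\<in>{1..J}. \<exists>B Sg. B \<subseteq> words l q \<and> card B = 2 * (q + 1) * N \<and>
           (\<forall>\<beta>\<in>B. Sg \<beta> \<subseteq> words l n \<and>
               real (card (Sg \<beta>)) \<ge> exp (rho * real n) / real l ^ q / (2 * real J)) \<and>
           (\<forall>\<beta>\<in>B. \<forall>\<alpha>\<in>Sg \<beta>. trunc q \<alpha> = \<beta> \<and>
               exp (a j * real n) \<le> deriv (El ^^ n) (pt El x \<alpha>) \<and>
               deriv (El ^^ n) (pt El x \<alpha>) \<le> exp (b j * real n) \<and>
               \<bar>Sn El x \<alpha> \<tau> - tan \<theta>\<bar> \<le> exp (- a j * real n) * (R / (lam - 1))))}"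

end

theory Submission
  imports Defs "HOL-Library.Countable"
begin

text \<open>Proposition 3.4 selects \<open>N\<close> prefixes
  in \<open>B\<close> such that, for every set \<open>A\<close> of words with one word ending in each of them, the
  affine map \<open>t \<mapsto> G(x, A, t)\<close> has Jacobian at least 1. Hence the parameters \<open>t\<close> in the cube
  for which every \<open>S\<^sub>n(x; \<alpha>; \<tau>\<^sub>t)\<close>, \<open>\<alpha> \<in> A\<close>, lies within \<open>\<delta> = exp(-a\<^sub>j n) \<vartheta>\<^sub>R\<close> of \<open>tan \<theta>\<close>
  form a set of measure \<open>O(\<delta>\<^sup>N)\<close>, uniformly in \<open>A\<close>. Bounded distortion leaves only \<open>O(exp(b\<^sub>j n))\<close>
  words with \<open>(E\<^sup>n)' \<le> exp(b\<^sub>j n)\<close>, so there are \<open>O(exp(N b\<^sub>j n))\<close> such sets \<open>A\<close>; but \<open>\<tau>\<^sub>t \<in> X(n)\<close>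
  places \<open>t\<close> in at least \<open>(exp(\<rho> n) / (2 J \<ell>\<^sup>q))\<^sup>N\<close> of the corresponding sets. By Markov's
  inequality these \<open>t\<close> have measure \<open>O(exp(N (b\<^sub>j - a\<^sub>j - \<rho>) n))\<close>, which
  \<open>b\<^sub>j - a\<^sub>j < \<rho>/3\<close> and the choice of \<open>N\<close> make \<open>O(\<lceil>2\<Lambda>\<rceil>\<^sup>-\<^sup>4\<^sup>n)\<close>. Summing over the \<open>O(\<lceil>2\<Lambda>\<rceil>\<^sup>2\<^sup>n)\<close> choices of \<open>x\<close> and \<open>\<theta>\<close> gives a
  summable sequence, and the Borel--Cantelli lemma concludes.\<close>

section \<open>Expanding maps of the circle\<close>

lemma periodic_add_of_int:
  fixes f :: "real \<Rightarrow> 'b"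
  assumes "\<And>x. f (x + 1) = f x"
  shows "f (x + of_int k) = f x"
proof -
  have nat: "f (y + real n) = f y" for y n
  proof (induction n)
    case (Suc n)
    have "f (y + real (Suc n)) = f ((y + real n) + 1)" by (simp add: algebra_simps)
    then show ?case using assms Suc by simp
  qed simp
  show ?thesis
  proof (cases "k \<ge> 0")
    case True
    then show ?thesis using nat[of x "nat k"] by simp
  next
    case False
    have "f (x + of_int k) = f (x + of_int k + real (nat (-k)))" using nat by simp
    also have "x + of_int k + real (nat (-k)) = x" using False by simp
    finally show ?thesis .
  qed
qed

lemma deriv_periodic_of_shift:
  assumes shift: "\<And>x. f (x + 1) = f x + c"
    and deriv: "\<And>x. (f has_real_derivative f' x) (at x)"
  shows "f' (x + 1) = f' x"
proof -
  have "((\<lambda>y. f (y + 1)) has_real_derivative f' (x + 1)) (at x)"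
    using deriv[of "x + 1"] by (simp add: DERIV_shift)
  moreover have "((\<lambda>y. f (y + 1)) has_real_derivative f' x) (at x)"
    unfolding shift using deriv[of x] by (auto intro!: derivative_eq_intros)
  ultimately show ?thesis using DERIV_unique by blast
qed

lemma periodic_continuous_bounded:
  fixes g :: "real \<Rightarrow> real"
  assumes "continuous_on UNIV g" and "\<And>x. g (x + 1) = g x"
  obtains M where "\<And>x. \<bar>g x\<bar> \<le> M"
proof -
  have "bounded (g ` {0..1})"
    using assms(1) by (intro compact_imp_bounded compact_continuous_image)
      (auto intro: continuous_on_subset)
  then obtain M where M: "\<forall>y\<in>g ` {0..1}. norm y \<le> M"
    unfolding bounded_iff by blast
  have "\<bar>g x\<bar> \<le> M" for x
  proof -
    have "g x = g (frac x + of_int \<lfloor>x\<rfloor>)" by (simp add: frac_def)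
    also have "\<dots> = g (frac x)" by (rule periodic_add_of_int) (fact assms(2))
    finally show ?thesis using M frac_lt_1[of x] frac_ge_0[of x] by simp
  qed
  then show ?thesis by (rule that)
qed

lemma Ck_has_real_derivative:
  assumes "Ck k f" "j < k"
  shows "((deriv ^^ j) f has_real_derivative (deriv ^^ Suc j) f x) (at x)"
  using assms unfolding Ck_def by blast

lemma Ck_continuous_deriv:
  assumes "Ck k f" "j \<le> k"
  shows "continuous_on UNIV ((deriv ^^ j) f)"
proof (cases "j = k")
  case False
  then have "isCont ((deriv ^^ j) f) x" for x
    using Ck_has_real_derivative[OF assms(1)] assms(2) DERIV_isCont by (metis le_neq_implies_less)
  then show ?thesis by (simp add: continuous_at_imp_continuous_on)
qed (use assms(1) Ck_def in auto)

lemma Ck_has_deriv: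
  assumes "Ck k f" "k \<ge> 1"
  shows "(f has_real_derivative deriv f x) (at x)"
  using Ck_has_real_derivative[OF assms(1), of 0] assms(2) by simp

locale expanding_circle_map =
  fixes r l :: nat and lam Lam :: real and El :: "real \<Rightarrow> real"
  assumes r_ge_2: "r \<ge> 2" and expanding: "expanding_map r l lam Lam El"
begin

lemma lam_gt_1: "lam > 1"
  and deriv_El_ge: "lam \<le> deriv El x"
  and deriv_El_le: "deriv El x \<le> Lam"
  and El_add_1: "El (x + 1) = El x + real l"
  and El_0: "El 0 \<in> \<int>"
  and Ck_El: "Ck r El"
  using expanding by (auto simp: expanding_map_def)

lemma El_has_deriv: "(El has_real_derivative deriv El x) (at x)"
  using Ck_has_deriv[OF Ck_El] r_ge_2 by simp

lemma deriv_El_has_deriv: "(deriv El has_real_derivative deriv (deriv El) x) (at x)"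
  using Ck_has_real_derivative[OF Ck_El, of 1] r_ge_2 by simp

lemma deriv_El_add_1: "deriv El (x + 1) = deriv El x"
  using El_add_1 El_has_deriv by (rule deriv_periodic_of_shift)

lemma deriv_El_add_of_int: "deriv El (x + of_int k) = deriv El x"
  by (rule periodic_add_of_int) (fact deriv_El_add_1)

lemma El_add_of_int: "El (x + of_int k) = El x + of_int (k * int l)"
proof -
  have "(\<lambda>y. El y - y * real l) (x + of_int k) = (\<lambda>y. El y - y * real l) x"
    by (rule periodic_add_of_int) (simp add: El_add_1 algebra_simps)
  then show ?thesis by (simp add: algebra_simps)
qed

text \<open>The Lipschitz bound on \<open>E'\<close> is the only use of the \<open>C\<^sup>2\<close> hypothesis; it drives
  bounded distortion.\<close>

lemma deriv_El_lipschitz: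
  obtains M where "M \<ge> 0" and "\<And>s t. \<bar>deriv El s - deriv El t\<bar> \<le> M * \<bar>s - t\<bar>"
proof -
  have "continuous_on UNIV (deriv (deriv El))"
    using Ck_continuous_deriv[OF Ck_El, of 2] r_ge_2 by (simp add: numeral_2_eq_2)
  moreover have "deriv (deriv El) (x + 1) = deriv (deriv El) x" for x
    by (rule deriv_periodic_of_shift[where f = "deriv El" and c = 0])
      (simp_all add: deriv_El_add_1 deriv_El_has_deriv)
  ultimately obtain M where M: "\<And>x. \<bar>deriv (deriv El) x\<bar> \<le> M"
    using periodic_continuous_bounded by blast
  have "\<bar>deriv El s - deriv El t\<bar> \<le> M * \<bar>s - t\<bar>" for s t
    using field_differentiable_bound[of UNIV "deriv El" "deriv (deriv El)" M s t]
      deriv_El_has_deriv M by auto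
  moreover have "M \<ge> 0" using M[of 0] by linarith
  ultimately show ?thesis using that by blast
qed

lemma El_expands: "s \<le> t \<Longrightarrow> lam * (t - s) \<le> El t - El s"
proof (cases "s = t")
  case False
  assume "s \<le> t"
  with False have "s < t" by simp
  then obtain z where "El t - El s = (t - s) * deriv El z"
    using MVT2[of s t El "deriv El"] El_has_deriv by blast
  moreover have "(t - s) * lam \<le> (t - s) * deriv El z"
    using deriv_El_ge[of z] \<open>s < t\<close> by (intro mult_left_mono) auto
  ultimately show ?thesis by (simp add: algebra_simps)
qed simp

lemma El_expands_abs: "lam * \<bar>s - t\<bar> \<le> \<bar>El s - El t\<bar>"
  using El_expands[of s t] El_expands[of t s] by (cases "s \<le> t") (auto simp: abs_if)

lemma strict_mono_El: "strict_mono El"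
proof (rule strict_monoI)
  fix s t :: real assume "s < t"
  then show "El s < El t" using El_expands[of s t] lam_gt_1
    by (smt (verit) mult_pos_pos)
qed

lemma El_less_iff: "El s < El t \<longleftrightarrow> s < t"
  using strict_mono_El by (rule strict_mono_less)

lemma El_eq_iff: "El s = El t \<longleftrightarrow> s = t"
  using strict_mono_El by (rule strict_mono_eq)

lemma El_surj: "\<exists>y. El y = v"
proof -
  define d where "d = \<bar>v - El 0\<bar>"
  have "El (-d) \<le> v" "v \<le> El d"
    using El_expands[of "-d" 0] El_expands[of 0 d] lam_gt_1
    unfolding d_def by (smt (verit) mult_le_cancel_right1)+
  moreover have "-d \<le> d" unfolding d_def by simp
  ultimately show ?thesis
    using IVT[of El "-d" v d] El_has_deriv DERIV_isCont by blast
qed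

text \<open>\<open>inv_branch a u\<close> is the point of the \<open>a\<close>-th fundamental interval mapped to \<open>u\<close>; unlike
  \<open>branch\<close> it does not reduce \<open>u\<close> modulo 1, so it also makes sense at \<open>u = 1\<close>.\<close>

definition inv_branch :: "nat \<Rightarrow> real \<Rightarrow> real" where
  "inv_branch a u = (THE y. El y = El 0 + real a + u)"

lemma El_inv_branch: "El (inv_branch a u) = El 0 + real a + u"
proof -
  from El_surj obtain y where y: "El y = El 0 + real a + u" ..
  have "\<exists>!y. El y = El 0 + real a + u"
  proof (rule ex1I[of _ y])
    show "z = y" if "El z = El 0 + real a + u" for z
      using that y El_eq_iff[of z y] by simp
  qed (fact y)
  then show ?thesis unfolding inv_branch_def by (rule theI')
qed

lemma inv_branch_eqI: "El y = El 0 + real a + u \<Longrightarrow> inv_branch a u = y"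
  using El_inv_branch El_eq_iff by metis

lemma branch_eq_inv_branch: "branch El j x = inv_branch j (frac x)"
  unfolding branch_def inv_branch_def ..

lemma inv_branch_contracts: "\<bar>inv_branch a u - inv_branch a v\<bar> \<le> \<bar>u - v\<bar> / lam"
proof -
  have "lam * \<bar>inv_branch a u - inv_branch a v\<bar> \<le> \<bar>u - v\<bar>"
    using El_expands_abs[of "inv_branch a u" "inv_branch a v"] by (simp add: El_inv_branch)
  then show ?thesis using lam_gt_1 by (simp add: pos_le_divide_eq mult.commute)
qed

lemma inv_branch_strict_mono: "u < v \<Longrightarrow> inv_branch a u < inv_branch a v"
  using El_less_iff[of "inv_branch a u" "inv_branch a v"] by (simp add: El_inv_branch)

lemma inv_branch_in_unit:
  assumes "u \<in> {0..<1}" "a < l"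
  shows "inv_branch a u \<in> {0..<1}"
proof -
  have "real a + 1 \<le> real l" using assms(2) by linarith
  then have "El 0 \<le> El (inv_branch a u)" "El (inv_branch a u) < El 1"
    using assms(1) El_add_1[of 0] by (auto simp: El_inv_branch)
  then show ?thesis
    using El_less_iff[of "inv_branch a u" 0] El_less_iff[of "inv_branch a u" 1] by auto
qed

lemma inv_branch_1: "inv_branch a 1 = inv_branch (Suc a) 0"
  by (rule inv_branch_eqI) (simp add: El_inv_branch)

lemma inv_branch_l_0: "inv_branch l 0 = 1"
  by (rule inv_branch_eqI) (simp add: El_add_1[of 0, simplified])

lemma inv_branch_0_0: "inv_branch 0 0 = 0"
  by (rule inv_branch_eqI) simp

end

section \<open>Words and bounded distortion\<close>

lemma finite_words: "finite (words l n)"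
proof -
  have "words l n = {xs. set xs \<subseteq> {..<l} \<and> length xs = n}" unfolding words_def by auto
  then show ?thesis using finite_lists_length_eq[of "{..<l}" n] by simp
qed

lemma words_Suc: "words l (Suc n) = (\<lambda>(as, b). as @ [b]) ` (words l n \<times> {..<l})"
proof
  show "words l (Suc n) \<subseteq> (\<lambda>(as, b). as @ [b]) ` (words l n \<times> {..<l})"
  proof
    fix xs assume xs: "xs \<in> words l (Suc n)"
    then have "xs \<noteq> []" unfolding words_def by auto
    then have "xs = butlast xs @ [last xs]" by simp
    moreover have "butlast xs \<in> words l n" "last xs < l"
      using xs last_in_set[OF \<open>xs \<noteq> []\<close>] unfolding words_def by (auto dest: in_set_butlastD)
    ultimately show "xs \<in> (\<lambda>(as, b). as @ [b]) ` (words l n \<times> {..<l})"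
      by (intro image_eqI[of _ _ "(butlast xs, last xs)"]) auto
  qed
qed (auto simp: words_def)

lemma inj_on_snoc_words: "inj_on (\<lambda>(as, b). as @ [b]) (words l n \<times> {..<l})"
  by (auto simp: inj_on_def)

context expanding_circle_map
begin

text \<open>\<open>inv_word y \<alpha>\<close> is the paper's \<open>y\<^sub>\<alpha>\<close>, again without reduction modulo 1.\<close>

fun inv_word :: "real \<Rightarrow> nat list \<Rightarrow> real" where
  "inv_word y [] = y"
| "inv_word y (a # as) = inv_branch a (inv_word y as)"

lemma pt_eq_inv_word:
  assumes "x \<in> {0..<1}" "set \<alpha> \<subseteq> {..<l}"
  shows "pt El x \<alpha> = inv_word x \<alpha> \<and> inv_word x \<alpha> \<in> {0..<1}"
  using assms(2)
proof (induction \<alpha>)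
  case (Cons a as)
  then have IH: "pt El x as = inv_word x as" "inv_word x as \<in> {0..<1}" by auto
  then have "frac (inv_word x as) = inv_word x as" by (simp add: frac_eq)
  then show ?case
    using IH inv_branch_in_unit[OF IH(2)] Cons.prems by (simp add: branch_eq_inv_branch)
qed (use assms(1) in simp)

lemma inv_word_append: "inv_word y (xs @ ys) = inv_word (inv_word y ys) xs"
  by (induction xs) auto

lemma inv_word_contracts: "\<bar>inv_word y \<alpha> - inv_word z \<alpha>\<bar> \<le> \<bar>y - z\<bar> / lam ^ length \<alpha>"
proof (induction \<alpha>)
  case (Cons a as)
  have "\<bar>inv_word y (a # as) - inv_word z (a # as)\<bar> \<le> \<bar>inv_word y as - inv_word z as\<bar> / lam"
    using inv_branch_contracts by simp
  also have "\<dots> \<le> (\<bar>y - z\<bar> / lam ^ length as) / lam"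
    using Cons lam_gt_1 by (intro divide_right_mono) auto
  finally show ?case by (simp add: field_simps)
qed simp

lemma inv_word_strict_mono: "y < z \<Longrightarrow> inv_word y \<alpha> < inv_word z \<alpha>"
  by (induction \<alpha>) (auto intro: inv_branch_strict_mono)

lemma continuous_on_inv_word: "continuous_on UNIV (\<lambda>y. inv_word y \<alpha>)"
proof (rule lipschitz_on_continuous_on)
  show "(1 / lam ^ length \<alpha>)-lipschitz_on UNIV (\<lambda>y. inv_word y \<alpha>)"
    using inv_word_contracts lam_gt_1 by (intro lipschitz_onI) (auto simp: dist_real_def)
qed

lemma El_iter_add_of_int: "(El ^^ n) (x + of_int k) = (El ^^ n) x + of_int (k * int l ^ n)"
proof (induction n)
  case (Suc n)
  have "(El ^^ Suc n) (x + of_int k) = El ((El ^^ n) x + of_int (k * int l ^ n))"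
    using Suc by simp
  also have "\<dots> = El ((El ^^ n) x) + of_int (k * int l ^ n * int l)"
    by (rule El_add_of_int)
  finally show ?case by (simp add: algebra_simps)
qed simp

lemma El_inv_branch_int: "El (inv_branch a w) = w + of_int (\<lfloor>El 0\<rfloor> + int a)"
  using El_inv_branch[of a w] El_0 by (auto elim: Ints_cases)

lemma El_iter_inv_word_diff:
  "(El ^^ length \<alpha>) (inv_word y \<alpha>) - (El ^^ length \<alpha>) (inv_word z \<alpha>) = y - z"
proof (induction \<alpha>)
  case (Cons a as)
  have "(El ^^ Suc (length as)) (inv_branch a w) =
      (El ^^ length as) w + of_int ((\<lfloor>El 0\<rfloor> + int a) * int l ^ length as)" for w
    by (simp only: funpow_Suc_right comp_apply El_inv_branch_int El_iter_add_of_int)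
  then show ?case using Cons by simp
qed simp

definition deriv_iter :: "nat \<Rightarrow> real \<Rightarrow> real" where
  "deriv_iter n x = (\<Prod>k<n. deriv El ((El ^^ k) x))"

lemma deriv_iter_Suc: "deriv_iter (Suc n) x = deriv_iter n (El x) * deriv El x"
  unfolding deriv_iter_def prod.lessThan_Suc_shift
  by (simp add: funpow_Suc_right del: funpow.simps)

lemma El_iter_has_deriv: "((El ^^ n) has_real_derivative deriv_iter n x) (at x)"
proof (induction n arbitrary: x)
  case 0
  then show ?case by (simp add: deriv_iter_def)
next
  case (Suc n)
  show ?case
    unfolding funpow_Suc_right deriv_iter_Suc by (rule DERIV_chain[OF Suc El_has_deriv])
qed

lemma deriv_El_iter: "deriv (El ^^ n) x = deriv_iter n x"
  using El_iter_has_deriv by (rule DERIV_imp_deriv)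

lemma deriv_iter_add_of_int: "deriv_iter n (x + of_int k) = deriv_iter n x"
  unfolding deriv_iter_def by (simp only: El_iter_add_of_int deriv_El_add_of_int)

lemma deriv_iter_pos: "deriv_iter n x > 0"
  unfolding deriv_iter_def using lam_gt_1 deriv_El_ge by (intro prod_pos) (smt (verit))

definition expansion :: "real \<Rightarrow> nat list \<Rightarrow> real" where
  "expansion y \<alpha> = deriv_iter (length \<alpha>) (inv_word y \<alpha>)"

lemma expansion_pos: "expansion y \<alpha> > 0"
  unfolding expansion_def by (rule deriv_iter_pos)

lemma expansion_Cons: "expansion y (a # as) = expansion y as * deriv El (inv_word y (a # as))"
  unfolding expansion_def
  by (simp only: length_Cons inv_word.simps deriv_iter_Suc El_inv_branch_int deriv_iter_add_of_int)

lemma deriv_El_ratio: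
  assumes "M \<ge> 0" and "\<And>s t. \<bar>deriv El s - deriv El t\<bar> \<le> M * \<bar>s - t\<bar>"
  shows "deriv El s \<le> exp (M / lam * \<bar>s - t\<bar>) * deriv El t"
proof -
  define x where "x = M / lam * \<bar>s - t\<bar>"
  have "x \<ge> 0" unfolding x_def using assms(1) lam_gt_1 by simp
  have "deriv El s \<le> deriv El t + x * lam"
    using assms(2)[of s t] lam_gt_1 unfolding x_def by simp
  also have "\<dots> \<le> (1 + x) * deriv El t"
    using mult_left_mono[OF deriv_El_ge[of t] \<open>x \<ge> 0\<close>] by (simp add: algebra_simps)
  also have "\<dots> \<le> exp x * deriv El t"
    using exp_ge_add_one_self_aux[OF \<open>x \<ge> 0\<close>] deriv_El_ge[of t] lam_gt_1
    by (intro mult_right_mono) auto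
  finally show ?thesis unfolding x_def .
qed

lemma expansion_distortion:
  assumes "M \<ge> 0" and "\<And>s t. \<bar>deriv El s - deriv El t\<bar> \<le> M * \<bar>s - t\<bar>" and "\<bar>y - z\<bar> \<le> 1"
  shows "expansion y \<alpha> \<le> exp (M / lam * (\<Sum>k<length \<alpha>. (1 / lam) ^ Suc k)) * expansion z \<alpha>"
proof (induction \<alpha>)
  case Nil
  then show ?case by (simp add: expansion_def deriv_iter_def)
next
  case (Cons a as)
  define s where "s = inv_word y (a # as)"
  define t where "t = inv_word z (a # as)"
  define e where "e = M / lam * (1 / lam) ^ Suc (length as)"
  have "\<bar>s - t\<bar> \<le> \<bar>y - z\<bar> / lam ^ Suc (length as)"
    unfolding s_def t_def using inv_word_contracts[of y "a # as" z] by simp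
  also have "\<dots> \<le> (1 / lam) ^ Suc (length as)"
    using assms(3) lam_gt_1 by (simp add: divide_right_mono power_one_over)
  finally have "M / lam * \<bar>s - t\<bar> \<le> e"
    unfolding e_def using assms(1) lam_gt_1 by (intro mult_left_mono) auto
  then have step: "deriv El s \<le> exp e * deriv El t"
    using deriv_El_ratio[OF assms(1,2), of s t] deriv_El_ge[of t] lam_gt_1
    by (smt (verit) exp_le_cancel_iff mult_right_mono)
  have "expansion y (a # as) = expansion y as * deriv El s"
    unfolding s_def by (rule expansion_Cons)
  also have "\<dots> \<le> (exp (M / lam * (\<Sum>k<length as. (1 / lam) ^ Suc k)) * expansion z as) *
      (exp e * deriv El t)"
    using Cons step expansion_pos[of y as] deriv_El_ge[of s] lam_gt_1 by (intro mult_mono) auto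
  also have "\<dots> = exp (M / lam * (\<Sum>k<length (a # as). (1 / lam) ^ Suc k)) * expansion z (a # as)"
    unfolding t_def e_def expansion_Cons by (simp add: exp_add algebra_simps)
  finally show ?case .
qed

lemma bounded_distortion:
  obtains C where "C > 0" and "\<And>y z \<alpha>. \<bar>y - z\<bar> \<le> 1 \<Longrightarrow> expansion y \<alpha> \<le> C * expansion z \<alpha>"
proof -
  obtain M where M: "M \<ge> 0" "\<And>s t. \<bar>deriv El s - deriv El t\<bar> \<le> M * \<bar>s - t\<bar>"
    using deriv_El_lipschitz by blast
  define C where "C = exp (M / lam * (1 / (lam - 1)))"
  have geometric: "(\<Sum>k<n. (1 / lam) ^ Suc k) \<le> 1 / (lam - 1)" for n
  proof -
    have q: "1 / lam \<noteq> 1" using lam_gt_1 by simp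
    have "(\<Sum>k<n. (1 / lam) ^ Suc k) = (1 / lam) * (\<Sum>k<n. (1 / lam) ^ k)"
      by (simp add: sum_distrib_left)
    also have "(\<Sum>k<n. (1 / lam) ^ k) = (1 - (1 / lam) ^ n) / (1 - 1 / lam)"
      by (simp only: sum_gp_strict q if_False)
    also have "(1 / lam) * ((1 - (1 / lam) ^ n) / (1 - 1 / lam)) = (1 - (1 / lam) ^ n) / (lam - 1)"
      using lam_gt_1 by (simp add: field_simps)
    also have "\<dots> \<le> 1 / (lam - 1)"
      using lam_gt_1 by (intro divide_right_mono) auto
    finally show ?thesis .
  qed
  have "expansion y \<alpha> \<le> C * expansion z \<alpha>" if "\<bar>y - z\<bar> \<le> 1" for y z \<alpha>
  proof -
    have "M / lam * (\<Sum>k<length \<alpha>. (1 / lam) ^ Suc k) \<le> M / lam * (1 / (lam - 1))"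
      using geometric M(1) lam_gt_1 by (intro mult_left_mono) auto
    then have "exp (M / lam * (\<Sum>k<length \<alpha>. (1 / lam) ^ Suc k)) \<le> C"
      unfolding C_def by simp
    then show ?thesis
      using expansion_distortion[OF M that, of \<alpha>] expansion_pos[of z \<alpha>]
      by (smt (verit) mult_right_mono)
  qed
  moreover have "C > 0" unfolding C_def by simp
  ultimately show ?thesis using that by blast
qed

text \<open>The words of length \<open>n\<close> cut \<open>[0, 1]\<close> into the intervals \<open>[0\<^sub>\<alpha>, 1\<^sub>\<alpha>]\<close>.\<close>

lemma sum_inv_word_lengths: "(\<Sum>\<alpha>\<in>words l n. inv_word 1 \<alpha> - inv_word 0 \<alpha>) = 1"
proof (induction n)
  case 0
  have "words l 0 = {[]}" unfolding words_def by auto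
  then show ?case by simp
next
  case (Suc n)
  have telescope: "(\<Sum>b<l. inv_word (inv_branch b 1) as - inv_word (inv_branch b 0) as) =
      inv_word 1 as - inv_word 0 as" for as
    using sum_lessThan_telescope[of "\<lambda>b. inv_word (inv_branch b 0) as" l]
    by (simp add: inv_branch_1 inv_branch_l_0 inv_branch_0_0)
  have "(\<Sum>\<alpha>\<in>words l (Suc n). inv_word 1 \<alpha> - inv_word 0 \<alpha>) =
      (\<Sum>(as, b)\<in>words l n \<times> {..<l}. inv_word (inv_branch b 1) as - inv_word (inv_branch b 0) as)"
    unfolding words_Suc
    by (subst sum.reindex[OF inj_on_snoc_words]) (simp add: case_prod_beta inv_word_append)
  also have "\<dots> = (\<Sum>as\<in>words l n. inv_word 1 as - inv_word 0 as)"
    by (simp add: sum.cartesian_product[symmetric] telescope)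
  finally show ?case using Suc by simp
qed

lemma expansion_mean_value: "\<exists>y\<in>{0..1}. expansion y \<alpha> * (inv_word 1 \<alpha> - inv_word 0 \<alpha>) = 1"
proof -
  define n where "n = length \<alpha>"
  obtain z where z: "inv_word 0 \<alpha> < z" "z < inv_word 1 \<alpha>"
    "(El ^^ n) (inv_word 1 \<alpha>) - (El ^^ n) (inv_word 0 \<alpha>) = (inv_word 1 \<alpha> - inv_word 0 \<alpha>) * deriv_iter n z"
    using MVT2[OF inv_word_strict_mono[of 0 1 \<alpha>], of "El ^^ n" "deriv_iter n"] El_iter_has_deriv by auto
  then have z1: "(inv_word 1 \<alpha> - inv_word 0 \<alpha>) * deriv_iter n z = 1"
    using El_iter_inv_word_diff[of \<alpha> 1 0] unfolding n_def by simp
  obtain y where y: "0 \<le> y" "y \<le> 1" "inv_word y \<alpha> = z"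
    using IVT[of "\<lambda>y. inv_word y \<alpha>" 0 z 1] z(1,2) continuous_on_inv_word[of \<alpha>]
    by (auto simp: continuous_on_eq_continuous_at)
  then show ?thesis
    using z1 unfolding expansion_def n_def by (intro bexI[of _ y]) (auto simp: mult.commute)
qed

lemma sum_inverse_expansion_le:
  assumes C: "C > 0" "\<And>y z \<alpha>. \<bar>y - z\<bar> \<le> 1 \<Longrightarrow> expansion y \<alpha> \<le> C * expansion z \<alpha>"
    and x: "x \<in> {0..1}"
  shows "(\<Sum>\<alpha>\<in>words l n. 1 / expansion x \<alpha>) \<le> C"
proof -
  have "1 / expansion x \<alpha> \<le> C * (inv_word 1 \<alpha> - inv_word 0 \<alpha>)" for \<alpha>
  proof -
    obtain y where y: "y \<in> {0..1}" "expansion y \<alpha> * (inv_word 1 \<alpha> - inv_word 0 \<alpha>) = 1"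
      using expansion_mean_value by blast
    have "expansion y \<alpha> \<le> C * expansion x \<alpha>" using C(2) x y(1) by auto
    then have "1 / expansion x \<alpha> \<le> C / expansion y \<alpha>"
      using C(1) expansion_pos[of x \<alpha>] expansion_pos[of y \<alpha>] by (simp add: field_simps)
    also have "\<dots> = C * (inv_word 1 \<alpha> - inv_word 0 \<alpha>)"
      using y(2) expansion_pos[of y \<alpha>] by (simp add: field_simps)
    finally show ?thesis .
  qed
  then have "(\<Sum>\<alpha>\<in>words l n. 1 / expansion x \<alpha>) \<le> (\<Sum>\<alpha>\<in>words l n. C * (inv_word 1 \<alpha> - inv_word 0 \<alpha>))"
    by (rule sum_mono)
  also have "\<dots> = C" by (simp add: sum_distrib_left[symmetric] sum_inv_word_lengths)
  finally show ?thesis .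
qed

lemma card_words_bounded_expansion:
  obtains C where "C > 0"
    and "\<And>x n B. x \<in> {0..<1} \<Longrightarrow> B > 0 \<Longrightarrow>
      real (card {\<alpha>\<in>words l n. deriv (El ^^ n) (pt El x \<alpha>) \<le> B}) \<le> C * B"
proof -
  obtain C where C: "C > 0" "\<And>y z \<alpha>. \<bar>y - z\<bar> \<le> 1 \<Longrightarrow> expansion y \<alpha> \<le> C * expansion z \<alpha>"
    using bounded_distortion by blast
  have "real (card {\<alpha>\<in>words l n. deriv (El ^^ n) (pt El x \<alpha>) \<le> B}) \<le> C * B"
    if x: "x \<in> {0..<1}" and B: "B > 0" for x n B
  proof -
    define S where "S = {\<alpha>\<in>words l n. deriv (El ^^ n) (pt El x \<alpha>) \<le> B}"
    have "1 \<le> B * (1 / expansion x \<alpha>)" if "\<alpha> \<in> S" for \<alpha>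
    proof -
      have "length \<alpha> = n" "set \<alpha> \<subseteq> {..<l}" using that unfolding S_def words_def by auto
      then have "deriv (El ^^ n) (pt El x \<alpha>) = expansion x \<alpha>"
        using pt_eq_inv_word[OF x] by (simp add: expansion_def deriv_El_iter)
      then show ?thesis using that expansion_pos[of x \<alpha>] unfolding S_def by (simp add: field_simps)
    qed
    then have "real (card S) \<le> (\<Sum>\<alpha>\<in>S. B * (1 / expansion x \<alpha>))"
      using sum_mono[of S "\<lambda>_. 1::real"] by simp
    also have "\<dots> \<le> (\<Sum>\<alpha>\<in>words l n. B * (1 / expansion x \<alpha>))"
      using B expansion_pos[of x]
      by (intro sum_mono2 finite_words) (auto simp: S_def intro: divide_nonneg_pos less_imp_le)
    also have "\<dots> = B * (\<Sum>\<alpha>\<in>words l n. 1 / expansion x \<alpha>)"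
      by (simp add: sum_distrib_left)
    also have "\<dots> \<le> B * C"
      using sum_inverse_expansion_le[OF C, of x n] x B by (intro mult_left_mono) auto
    finally show ?thesis unfolding S_def by (simp add: mult.commute)
  qed
  with C(1) show ?thesis using that by blast
qed

end

section \<open>Volume of intersections of slabs with the cube\<close>

lemma prod_diag_eq_0_if_not_permutes:
  fixes M :: "real^'n::finite^'n"
  assumes "\<And>i k. i \<notin> S \<Longrightarrow> k \<in> S \<Longrightarrow> M $ i $ k = 0"
    and "\<And>i k. i \<notin> S \<Longrightarrow> k \<notin> S \<Longrightarrow> M $ i $ k = (if i = k then 1 else 0)"
    and "p permutes UNIV" "\<not> p permutes S"
  shows "(\<Prod>i\<in>UNIV. M $ i $ p i) = 0"
proof -
  obtain i where i: "i \<notin> S" "p i \<noteq> i"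
    using assms(3,4) unfolding permutes_def by blast
  then have "M $ i $ p i = 0" using assms(1,2) by (cases "p i \<in> S") auto
  then show ?thesis by (intro prod_zero) auto
qed

lemma det_eq_det_on_block:
  fixes M :: "real^'n::finite^'n"
  assumes "\<And>i k. i \<notin> S \<Longrightarrow> k \<in> S \<Longrightarrow> M $ i $ k = 0"
    and id: "\<And>i k. i \<notin> S \<Longrightarrow> k \<notin> S \<Longrightarrow> M $ i $ k = (if i = k then 1 else 0)"
  shows "det M = det_on S (\<lambda>i k. M $ i $ k)"
proof -
  have "det M = (\<Sum>p\<in>{p. p permutes S}. of_int (sign p) * (\<Prod>i\<in>UNIV. M $ i $ p i))"
    unfolding det_def using prod_diag_eq_0_if_not_permutes[OF assms]
    by (intro sum.mono_neutral_right finite_permutations) (auto intro: permutes_subset)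
  also have "\<dots> = (\<Sum>p\<in>{p. p permutes S}. of_int (sign p) * (\<Prod>i\<in>S. M $ i $ p i))"
  proof (rule sum.cong[OF refl])
    fix p assume "p \<in> {p. p permutes S}"
    then have "\<forall>i\<in>UNIV - S. M $ i $ p i = 1" using id permutes_not_in by fastforce
    then show "of_int (sign p) * (\<Prod>i\<in>UNIV. M $ i $ p i) = of_int (sign p) * (\<Prod>i\<in>S. M $ i $ p i)"
      by (subst prod.mono_neutral_right[of UNIV S]) auto
  qed
  finally show ?thesis unfolding det_on_def by simp
qed

definition transfer_perm :: "('a \<Rightarrow> 'b) \<Rightarrow> 'a set \<Rightarrow> 'b set \<Rightarrow> ('a \<Rightarrow> 'a) \<Rightarrow> 'b \<Rightarrow> 'b" where
  "transfer_perm f A B p y = (if y \<in> B then f (p (inv_into A f y)) else y)"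

lemma transfer_perm_apply: "bij_betw f A B \<Longrightarrow> a \<in> A \<Longrightarrow> transfer_perm f A B p (f a) = f (p a)"
  unfolding transfer_perm_def by (simp add: bij_betwE bij_betw_inv_into_left)

lemma transfer_perm_permutes:
  assumes "bij_betw f A B" "finite A" "p permutes A"
  shows "transfer_perm f A B p permutes B" and "sign (transfer_perm f A B p) = sign p"
proof -
  interpret permutes_bij_finite p A B f "inv_into A f" "transfer_perm f A B p"
    by unfold_locales
      (use assms bij_betw_inv_into_left in \<open>auto simp: transfer_perm_def intro!: eq_reflection ext\<close>)
  show "transfer_perm f A B p permutes B" by (rule permutes_p')
  show "sign (transfer_perm f A B p) = sign p" by (rule sign_p')
qed

lemma bij_betw_transfer_perm:
  assumes bij: "bij_betw f A B" and "finite A"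
  shows "bij_betw (transfer_perm f A B) {p. p permutes A} {q. q permutes B}"
proof (rule bij_betw_byWitness[where f' = "transfer_perm (inv_into A f) B A"])
  have bij': "bij_betw (inv_into A f) B A" and "finite B"
    using bij_betw_inv_into[OF bij] bij_betw_finite[OF bij] \<open>finite A\<close> by auto
  have inv': "inv_into B (inv_into A f) a = f a" if "a \<in> A" for a
    using bij that by (rule inv_into_inv_into_eq)
  show "\<forall>p\<in>{p. p permutes A}. transfer_perm (inv_into A f) B A (transfer_perm f A B p) = p"
    using bij inv' permutes_not_in bij_betwE bij_betw_inv_into_left
    by (fastforce simp: transfer_perm_def permutes_in_image)
  show "\<forall>q\<in>{q. q permutes B}. transfer_perm f A B (transfer_perm (inv_into A f) B A q) = q"
    using bij inv' permutes_not_in bij_betwE[OF bij'] bij_betw_inv_into_right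
    by (fastforce simp: transfer_perm_def permutes_in_image)
  show "transfer_perm f A B ` {p. p permutes A} \<subseteq> {q. q permutes B}"
    using transfer_perm_permutes(1)[OF bij \<open>finite A\<close>] by auto
  show "transfer_perm (inv_into A f) B A ` {q. q permutes B} \<subseteq> {p. p permutes A}"
    using transfer_perm_permutes(1)[OF bij' \<open>finite B\<close>] by auto
qed

lemma det_on_reindex:
  assumes bij: "bij_betw f A B" and "finite A"
  shows "det_on B G = det_on A (\<lambda>a b. G (f a) (f b))"
proof -
  have "det_on B G = (\<Sum>p | p permutes A. of_int (sign (transfer_perm f A B p)) *
      (\<Prod>b\<in>B. G b (transfer_perm f A B p b)))"
    unfolding det_on_def by (rule sum.reindex_bij_betw[OF bij_betw_transfer_perm[OF assms], symmetric])
  also have "\<dots> = det_on A (\<lambda>a b. G (f a) (f b))"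
    unfolding det_on_def prod.reindex_bij_betw[OF bij, symmetric]
    by (intro sum.cong refl prod.cong)
      (simp_all add: transfer_perm_permutes(2)[OF assms] transfer_perm_apply[OF bij])
  finally show ?thesis .
qed

lemma det_on_cong:
  assumes "\<And>a b. a \<in> S \<Longrightarrow> b \<in> S \<Longrightarrow> G a b = G' a b"
  shows "det_on S G = det_on S G'"
  unfolding det_on_def
proof (rule sum.cong[OF refl])
  fix p assume "p \<in> {p. p permutes S}"
  then have p: "p permutes S" by simp
  have "(\<Prod>a\<in>S. G a (p a)) = (\<Prod>a\<in>S. G' a (p a))"
    by (rule prod.cong[OF refl]) (use assms permutes_in_image[OF p] in auto)
  then show "of_int (sign p) * (\<Prod>a\<in>S. G a (p a)) = of_int (sign p) * (\<Prod>a\<in>S. G' a (p a))"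
    by simp
qed

lemma inj_on_independent_of_surj_inner:
  fixes r :: "'a \<Rightarrow> 'v::real_inner"
  assumes "finite A" and surj: "\<forall>w. \<exists>v. \<forall>a\<in>A. r a \<bullet> v = w a"
  shows "inj_on r A" and "independent (r ` A)"
proof -
  show inj: "inj_on r A"
  proof (rule inj_onI)
    fix a b assume ab: "a \<in> A" "b \<in> A" "r a = r b"
    obtain v where v: "\<forall>x\<in>A. r x \<bullet> v = (if x = a then 1 else 0)"
      using spec[OF surj, of "\<lambda>x. if x = a then 1 else 0"] by blast
    have "r a \<bullet> v = 1" using v ab(1) by simp
    then have "r b \<bullet> v = 1" by (simp only: ab(3))
    then show "a = b" using v ab(2) by (auto split: if_splits)
  qed
  show "independent (r ` A)"
  proof
    assume "dependent (r ` A)"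
    then obtain u where u: "\<exists>x\<in>r ` A. u x \<noteq> 0" "(\<Sum>x\<in>r ` A. u x *\<^sub>R x) = 0"
      using dependent_finite[of "r ` A"] assms(1) by auto
    obtain v where v: "\<forall>a\<in>A. r a \<bullet> v = u (r a)"
      using spec[OF surj, of "\<lambda>a. u (r a)"] by blast
    have "0 = (\<Sum>x\<in>r ` A. u x *\<^sub>R x) \<bullet> v" using u(2) by simp
    also have "\<dots> = (\<Sum>a\<in>A. (u (r a))\<^sup>2)"
      using v by (simp add: inner_sum_left sum.reindex[OF inj] power2_eq_square)
    finally have "\<forall>a\<in>A. u (r a) = 0"
      using sum_nonneg_eq_0_iff[OF assms(1), of "\<lambda>a. (u (r a))\<^sup>2"] by simp
    then show False using u(1) by auto
  qed
qed

text \<open>Completing the rows \<open>r a\<close> by an orthonormal basis of their orthogonal complement gives a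
  square matrix whose squared determinant is the Gram determinant of the \<open>r a\<close>.\<close>

lemma orthonormal_complement:
  fixes r :: "'a \<Rightarrow> real^'n::finite"
  assumes "finite A" "inj_on r A" "independent (r ` A)"
  obtains Q where "finite Q" "card Q + card A = CARD('n)"
    and "\<And>a q. a \<in> A \<Longrightarrow> q \<in> Q \<Longrightarrow> r a \<bullet> q = 0"
    and "\<And>q q'. q \<in> Q \<Longrightarrow> q' \<in> Q \<Longrightarrow> q \<bullet> q' = (if q = q' then 1 else 0)"
proof -
  define K where "K = {y::real^'n \<in> UNIV. \<forall>x\<in>span (r ` A). orthogonal x y}"
  have "dim K + dim (span (r ` A)) = dim (UNIV::(real^'n) set)"
    unfolding K_def by (rule dim_subspace_orthogonal_to_vectors) auto
  moreover have "dim (span (r ` A)) = card A"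
    using dim_eq_card_independent[OF assms(3)] card_image[OF assms(2)] by simp
  ultimately have dimK: "dim K + card A = CARD('n)" by simp
  have "subspace K" unfolding K_def using subspace_orthogonal_to_vectors by simp
  then obtain Q where Q: "Q \<subseteq> K" "pairwise orthogonal Q" "\<And>x. x \<in> Q \<Longrightarrow> norm x = 1"
      "independent Q" "card Q = dim K" "span Q = K"
    by (rule orthonormal_basis_subspace) (rule that)
  show ?thesis
  proof (rule that)
    show "finite Q" using Q(4) by (rule finiteI_independent)
    show "card Q + card A = CARD('n)" using dimK Q(5) by simp
    show "r a \<bullet> q = 0" if "a \<in> A" "q \<in> Q" for a q
      using that Q(1) span_base[of "r a" "r ` A"] unfolding K_def orthogonal_def by blast
    show "q \<bullet> q' = (if q = q' then 1 else 0)" if "q \<in> Q" "q' \<in> Q" for q q'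
      using that Q(2,3) unfolding pairwise_def orthogonal_def
      by (auto simp: power2_norm_eq_inner[symmetric])
  qed
qed

lemma orthonormal_completion:
  fixes r :: "'a \<Rightarrow> real^'n::finite"
  assumes "finite A" "inj_on r A" "independent (r ` A)"
  obtains \<tau> :: "'n \<Rightarrow> 'a" and S and \<rho> :: "'n \<Rightarrow> real^'n"
  where "bij_betw \<tau> S A" "\<And>i. i \<in> S \<Longrightarrow> \<rho> i = r (\<tau> i)"
    and "\<And>i k. i \<in> S \<Longrightarrow> k \<notin> S \<Longrightarrow> \<rho> i \<bullet> \<rho> k = 0"
    and "\<And>i k. i \<notin> S \<Longrightarrow> k \<notin> S \<Longrightarrow> \<rho> i \<bullet> \<rho> k = (if i = k then 1 else 0)"
proof -
  obtain Q where Q: "finite Q" "card Q + card A = CARD('n)"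
    "\<And>a q. a \<in> A \<Longrightarrow> q \<in> Q \<Longrightarrow> r a \<bullet> q = 0"
    "\<And>q q'. q \<in> Q \<Longrightarrow> q' \<in> Q \<Longrightarrow> q \<bullet> q' = (if q = q' then 1 else 0)"
    by (rule orthonormal_complement[OF assms]) (rule that)
  define J where "J = Inl ` A \<union> Inr ` Q"
  have "card J = CARD('n)"
    unfolding J_def using assms(1) Q(1,2) by (subst card_Un_disjoint) (auto simp: card_image)
  then obtain \<sigma> where \<sigma>: "bij_betw \<sigma> (UNIV::'n set) J"
    using finite_same_card_bij[of "UNIV::'n set" J] assms(1) Q(1) unfolding J_def by auto
  have inj: "\<sigma> i = \<sigma> k \<Longrightarrow> i = k" for i k using inj_onD[OF bij_betw_imp_inj_on[OF \<sigma>]] by blast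
  define \<rho> where "\<rho> = (\<lambda>i. case \<sigma> i of Inl a \<Rightarrow> r a | Inr q \<Rightarrow> q)"
  define S where "S = {i. \<sigma> i \<in> Inl ` A}"
  define \<tau> where "\<tau> = (\<lambda>i. projl (\<sigma> i))"
  have inS: "\<sigma> i = Inl (\<tau> i) \<and> \<tau> i \<in> A \<and> \<rho> i = r (\<tau> i)" if "i \<in> S" for i
    using that unfolding S_def \<tau>_def \<rho>_def by auto
  have notS: "\<sigma> i = Inr (\<rho> i) \<and> \<rho> i \<in> Q" if "i \<notin> S" for i
    using that bij_betwE[OF \<sigma>] unfolding S_def \<rho>_def J_def by auto
  have bij: "bij_betw \<tau> S A"
  proof (rule bij_betw_imageI)
    show "inj_on \<tau> S" using inS inj by (metis inj_onI)
    have "a \<in> \<tau> ` S" if "a \<in> A" for a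
    proof -
      have "Inl a \<in> \<sigma> ` UNIV" using that bij_betw_imp_surj_on[OF \<sigma>] unfolding J_def by auto
      then obtain i where "\<sigma> i = Inl a" by (metis imageE)
      then show ?thesis using that unfolding S_def \<tau>_def by force
    qed
    then show "\<tau> ` S = A" using inS by auto
  qed
  have "\<rho> i \<bullet> \<rho> k = (if i = k then 1 else 0)" if "i \<notin> S" "k \<notin> S" for i k
    using Q(4) notS[OF that(1)] notS[OF that(2)] inj by (metis Inr_inject)
  then show ?thesis using that[OF bij] inS notS Q(3) by metis
qed

lemma det_rows_sq_eq_det_on:
  fixes \<rho> :: "'n::finite \<Rightarrow> real^'n"
  assumes "\<And>i k. i \<in> S \<Longrightarrow> k \<notin> S \<Longrightarrow> \<rho> i \<bullet> \<rho> k = 0"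
    and "\<And>i k. i \<notin> S \<Longrightarrow> k \<notin> S \<Longrightarrow> \<rho> i \<bullet> \<rho> k = (if i = k then 1 else 0)"
  shows "det (\<chi> i. \<rho> i) ^ 2 = det_on S (\<lambda>i k. \<rho> i \<bullet> \<rho> k)"
proof -
  define M where "M = (\<chi> i. \<rho> i) ** transpose (\<chi> i. \<rho> i)"
  have M: "M $ i $ k = \<rho> i \<bullet> \<rho> k" for i k
    by (simp add: M_def matrix_matrix_mult_def transpose_def inner_vec_def)
  have "det (\<chi> i. \<rho> i) ^ 2 = det M" by (simp add: M_def det_mul power2_eq_square)
  also have "\<dots> = det_on S (\<lambda>i k. M $ i $ k)"
  proof (rule det_eq_det_on_block)
    fix i k
    show "i \<notin> S \<Longrightarrow> k \<in> S \<Longrightarrow> M $ i $ k = 0" using assms(1)[of k i] by (simp add: M inner_commute)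
    show "i \<notin> S \<Longrightarrow> k \<notin> S \<Longrightarrow> M $ i $ k = (if i = k then 1 else 0)" by (simp add: M assms(2))
  qed
  also have "\<dots> = det_on S (\<lambda>i k. \<rho> i \<bullet> \<rho> k)" by (simp add: M)
  finally show ?thesis .
qed

lemma measure_le_of_matrix_image:
  fixes E :: "(real, 'n::{finite,wellorder}) vec set" and M :: "((real, 'n) vec, 'n) vec"
  assumes "E \<in> lmeasurable" "F \<in> lmeasurable" "1 \<le> \<bar>det M\<bar>" "(\<lambda>t. M *v t) ` E \<subseteq> F"
  shows "measure lebesgue E \<le> measure lebesgue F"
proof -
  have lin: "linear (\<lambda>t. M *v t)" by simp
  have "measure lebesgue E \<le> \<bar>det M\<bar> * measure lebesgue E"
    using assms(3) measure_nonneg[of lebesgue E] by (simp add: mult_le_cancel_right1)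
  also have "\<dots> = measure lebesgue ((\<lambda>t. M *v t) ` E)"
    using measure_linear_image[OF lin assms(1)] by simp
  also have "\<dots> \<le> measure lebesgue F"
    using measurable_linear_image[OF lin assms(1)] assms(2,4) by (intro measure_mono_fmeasurable) auto
  finally show ?thesis .
qed

definition cube_slabs ::
    "'a set \<Rightarrow> ('a \<Rightarrow> real) \<Rightarrow> ('n::finite \<Rightarrow> 'a \<Rightarrow> real) \<Rightarrow> real \<Rightarrow> (real^'n) set" where
  "cube_slabs A c g \<delta> = {t. (\<forall>i. \<bar>t $ i\<bar> \<le> 1) \<and> (\<forall>a\<in>A. \<bar>c a + (\<Sum>i\<in>UNIV. t $ i * g i a)\<bar> \<le> \<delta>)}"

lemma cube_eq_cbox: "{t::real^'n::finite. \<forall>i. \<bar>t $ i\<bar> \<le> 1} = cbox (-1) 1"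
  by (auto simp: mem_box_cart abs_le_iff)

lemma cube_slabs_subset_cube: "cube_slabs A c g \<delta> \<subseteq> {t. \<forall>i. \<bar>t $ i\<bar> \<le> 1}"
  unfolding cube_slabs_def by auto

lemma compact_cube_slabs: "compact (cube_slabs A c g \<delta>)"
proof -
  have "cube_slabs A c g \<delta> = (\<Inter>i. {t. \<bar>t $ i\<bar> \<le> 1}) \<inter> (\<Inter>a\<in>A. {t. \<bar>c a + (\<Sum>i\<in>UNIV. t $ i * g i a)\<bar> \<le> \<delta>})"
    unfolding cube_slabs_def by auto
  moreover have "closed \<dots>"
    by (intro closed_Int closed_INT ballI closed_Collect_le continuous_intros)
  ultimately show ?thesis
    using cube_slabs_subset_cube[of A c g \<delta>] bounded_subset[OF bounded_cbox]
    by (simp add: compact_eq_bounded_closed cube_eq_cbox)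
qed

lemma abs_inner_le_card:
  fixes q t :: "real^'n::finite"
  assumes "q \<bullet> q = 1" and "\<And>j. \<bar>t $ j\<bar> \<le> 1"
  shows "\<bar>q \<bullet> t\<bar> \<le> real CARD('n)"
proof -
  have "\<bar>q $ j * t $ j\<bar> \<le> 1" for j
    using component_le_norm_cart[of q j] assms
    unfolding abs_mult by (intro mult_le_one) (auto simp: norm_eq_sqrt_inner)
  then have "(\<Sum>j\<in>UNIV. \<bar>q $ j * t $ j\<bar>) \<le> (\<Sum>j\<in>(UNIV::'n set). 1)" by (intro sum_mono)
  moreover have "\<bar>q \<bullet> t\<bar> \<le> (\<Sum>j\<in>UNIV. \<bar>q $ j * t $ j\<bar>)"
    unfolding inner_vec_def inner_real_def by (rule sum_abs)
  ultimately show ?thesis by simp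
qed

text \<open>The matrix with rows \<open>\<rho> i\<close> maps the set into a box: the rows indexed by \<open>S\<close> are the
  normals of the slabs, the other ones are unit vectors.\<close>

lemma measure_cube_slabs_le_of_rows:
  fixes g :: "'n::{finite,wellorder} \<Rightarrow> 'a \<Rightarrow> real" and \<rho> :: "'n \<Rightarrow> (real, 'n) vec"
  assumes \<tau>: "bij_betw \<tau> S A" and rows: "\<And>i. i \<in> S \<Longrightarrow> \<rho> i = (\<chi> k. g k (\<tau> i))"
    and unit: "\<And>i. i \<notin> S \<Longrightarrow> \<rho> i \<bullet> \<rho> i = 1"
    and det: "1 \<le> \<bar>det (\<chi> i. \<rho> i)\<bar>" and "\<delta> \<ge> 0"
  shows "measure lebesgue (cube_slabs A c g \<delta>) \<le> (2 * \<delta>) ^ card A * (2 * real CARD('n)) ^ CARD('n)"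
proof -
  define C where "C = real CARD('n)"
  define lo where "lo = (\<chi> i. if i \<in> S then - c (\<tau> i) - \<delta> else - C)"
  define hi where "hi = (\<chi> i. if i \<in> S then - c (\<tau> i) + \<delta> else C)"
  have image: "(\<lambda>t. (\<chi> i. \<rho> i) *v t) ` cube_slabs A c g \<delta> \<subseteq> cbox lo hi"
  proof clarify
    fix t assume t: "t \<in> cube_slabs A c g \<delta>"
    have "lo $ i \<le> \<rho> i \<bullet> t \<and> \<rho> i \<bullet> t \<le> hi $ i" for i
    proof (cases "i \<in> S")
      case True
      then have "\<bar>c (\<tau> i) + \<rho> i \<bullet> t\<bar> \<le> \<delta>"
        using t rows[OF True] bij_betwE[OF \<tau>] by (simp add: cube_slabs_def inner_vec_def mult.commute)
      then show ?thesis using True by (simp add: lo_def hi_def abs_le_iff)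
    next
      case False
      then have "\<bar>\<rho> i \<bullet> t\<bar> \<le> C"
        using abs_inner_le_card[OF unit] t unfolding C_def cube_slabs_def by simp
      then show ?thesis using False by (simp add: lo_def hi_def abs_le_iff)
    qed
    then show "(\<chi> i. \<rho> i) *v t \<in> cbox lo hi"
      by (simp add: mem_box_cart matrix_vector_mult_def inner_vec_def mult.commute)
  qed
  have "measure lebesgue (cube_slabs A c g \<delta>) \<le> measure lebesgue (cbox lo hi)"
    using lmeasurable_compact[OF compact_cube_slabs] image det
    by (intro measure_le_of_matrix_image) auto
  also have "\<dots> = (\<Prod>i\<in>UNIV. hi $ i - lo $ i)"
  proof -
    have "lo \<in> cbox lo hi" using \<open>\<delta> \<ge> 0\<close> by (auto simp: mem_box_cart lo_def hi_def C_def)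
    then show ?thesis using content_cbox_cart[of lo hi] by auto
  qed
  also have "\<dots> = (\<Prod>i\<in>UNIV. if i \<in> S then 2 * \<delta> else 2 * C)"
    by (intro prod.cong) (auto simp: lo_def hi_def)
  also have "\<dots> = (2 * \<delta>) ^ card A * (2 * C) ^ card (- S)"
    using bij_betw_same_card[OF \<tau>] by (simp add: prod.If_cases Int_def Collect_neg_eq)
  also have "\<dots> \<le> (2 * \<delta>) ^ card A * (2 * C) ^ CARD('n)"
  proof -
    have "CARD('n) \<ge> 1" by (simp add: Suc_leI)
    then have "1 \<le> 2 * C" unfolding C_def by linarith
    then show ?thesis
      using \<open>\<delta> \<ge> 0\<close> by (intro mult_left_mono power_increasing card_mono) auto
  qed
  finally show ?thesis unfolding C_def .
qed

lemma measure_cube_slabs_le_wellorder: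
  fixes g :: "'n::{finite,wellorder} \<Rightarrow> 'a \<Rightarrow> real"
  assumes "finite A"
    and surj: "\<forall>w. \<exists>v::(real, 'n) vec. \<forall>a\<in>A. (\<Sum>i\<in>UNIV. v $ i * g i a) = w a"
    and gram: "det_on A (\<lambda>a b. \<Sum>i\<in>UNIV. g i a * g i b) \<ge> 1"
    and "\<delta> \<ge> 0"
  shows "measure lebesgue (cube_slabs A c g \<delta>) \<le> (2 * \<delta>) ^ card A * (2 * real CARD('n)) ^ CARD('n)"
proof -
  define r where "r = (\<lambda>a. (\<chi> i. g i a) :: (real, 'n) vec)"
  have "\<forall>w. \<exists>v. \<forall>a\<in>A. r a \<bullet> v = w a"
  proof
    fix w :: "'a \<Rightarrow> real"
    obtain v where "\<forall>a\<in>A. (\<Sum>i\<in>UNIV. v $ i * g i a) = w a" using surj by blast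
    then have "\<forall>a\<in>A. r a \<bullet> v = w a" by (simp add: r_def inner_vec_def mult.commute)
    then show "\<exists>v. \<forall>a\<in>A. r a \<bullet> v = w a" ..
  qed
  note ind = inj_on_independent_of_surj_inner[OF assms(1) this]
  show ?thesis
  proof (rule orthonormal_completion[OF assms(1) ind])
    fix \<tau> :: "'n \<Rightarrow> 'a" and S and \<rho> :: "'n \<Rightarrow> (real, 'n) vec"
    assume \<tau>: "bij_betw \<tau> S A" and \<rho>S: "\<And>i. i \<in> S \<Longrightarrow> \<rho> i = r (\<tau> i)"
      and orth: "\<And>i k. i \<in> S \<Longrightarrow> k \<notin> S \<Longrightarrow> \<rho> i \<bullet> \<rho> k = 0"
      and onb: "\<And>i k. i \<notin> S \<Longrightarrow> k \<notin> S \<Longrightarrow> \<rho> i \<bullet> \<rho> k = (if i = k then 1 else 0)"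
    have "finite S" using bij_betw_finite[OF \<tau>] assms(1) by simp
    have "det_on A (\<lambda>a b. r a \<bullet> r b) = det_on S (\<lambda>i k. r (\<tau> i) \<bullet> r (\<tau> k))"
      by (rule det_on_reindex[OF \<tau> \<open>finite S\<close>])
    also have "\<dots> = det_on S (\<lambda>i k. \<rho> i \<bullet> \<rho> k)"
      by (rule det_on_cong) (simp add: \<rho>S)
    also have "\<dots> = det (\<chi> i. \<rho> i) ^ 2"
      by (rule det_rows_sq_eq_det_on[OF orth onb, symmetric])
    finally have "1 \<le> \<bar>det (\<chi> i. \<rho> i)\<bar> ^ 2" using gram by (simp add: r_def inner_vec_def)
    then have det: "1 \<le> \<bar>det (\<chi> i. \<rho> i)\<bar>"
      using power_strict_mono[of "\<bar>det (\<chi> i. \<rho> i)\<bar>" 1 2] by fastforce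
    show ?thesis
      by (rule measure_cube_slabs_le_of_rows[OF \<tau> _ _ det \<open>\<delta> \<ge> 0\<close>]) (simp_all add: \<rho>S r_def onb)
  qed
qed

text \<open>The change of variables theorem for linear maps requires a well-ordered index type; an
  isomorphic copy of any finite type, ordered through \<open>to_nat\<close>, provides one.\<close>

typedef 'a ranked = "UNIV :: 'a set" by simp

lemma bij_Rep_ranked: "bij_betw Rep_ranked UNIV UNIV"
  by (rule bij_betw_byWitness[where f' = Abs_ranked]) (auto simp: Rep_ranked_inverse Abs_ranked_inverse)

lemma sum_Rep_ranked: "(\<Sum>j\<in>UNIV. f (Rep_ranked j)) = (\<Sum>i\<in>UNIV. f i)"
  by (rule sum.reindex_bij_betw[OF bij_Rep_ranked])

lemma prod_Rep_ranked: "(\<Prod>j\<in>UNIV. f (Rep_ranked j)) = (\<Prod>i\<in>UNIV. f i)"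
  by (rule prod.reindex_bij_betw[OF bij_Rep_ranked])

instance ranked :: (finite) finite
proof
  have "(UNIV :: 'a ranked set) = Abs_ranked ` UNIV"
    by (metis Rep_ranked_inverse UNIV_I image_eqI subsetI subset_antisym)
  then show "finite (UNIV :: 'a ranked set)" by (metis finite finite_imageI)
qed

instantiation ranked :: (finite) wellorder
begin

definition less_eq_ranked :: "'a ranked \<Rightarrow> 'a ranked \<Rightarrow> bool" where
  "less_eq_ranked x y \<longleftrightarrow> to_nat (Rep_ranked x) \<le> to_nat (Rep_ranked y)"

definition less_ranked :: "'a ranked \<Rightarrow> 'a ranked \<Rightarrow> bool" where
  "less_ranked x y \<longleftrightarrow> to_nat (Rep_ranked x) < to_nat (Rep_ranked y)"

instance
proof
  fix x y z :: "'a ranked"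
  show "x < y \<longleftrightarrow> x \<le> y \<and> \<not> y \<le> x" unfolding less_eq_ranked_def less_ranked_def by auto
  show "x \<le> x" unfolding less_eq_ranked_def by simp
  show "x \<le> y \<Longrightarrow> y \<le> z \<Longrightarrow> x \<le> z" unfolding less_eq_ranked_def by simp
  show "x \<le> y \<Longrightarrow> y \<le> x \<Longrightarrow> x = y"
    unfolding less_eq_ranked_def by (simp add: Rep_ranked_inject)
  show "x \<le> y \<or> y \<le> x" unfolding less_eq_ranked_def by auto
next
  fix P :: "'a ranked \<Rightarrow> bool" and a :: "'a ranked"
  assume step: "\<And>x. (\<And>y. y < x \<Longrightarrow> P y) \<Longrightarrow> P x"
  have "\<forall>a. to_nat (Rep_ranked a) = n \<longrightarrow> P a" for n
  proof (induction n rule: less_induct)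
    case (less n)
    show ?case
    proof (intro allI impI)
      fix a :: "'a ranked" assume a: "to_nat (Rep_ranked a) = n"
      show "P a"
      proof (rule step)
        fix y assume "y < a"
        then show "P y" using a less unfolding less_ranked_def by blast
      qed
    qed
  qed
  then show "P a" by blast
qed

end

lemma card_ranked: "CARD('a::finite ranked) = CARD('a)"
  using bij_betw_same_card[OF bij_Rep_ranked] by simp

lemma prod_Basis_cart: "(\<Prod>b\<in>(Basis :: (real^'n) set). f b) = (\<Prod>i\<in>UNIV. f (axis i 1))"
proof -
  have B: "(Basis :: (real^'n) set) = (\<lambda>i. axis i 1) ` UNIV" by (auto simp: Basis_vec_def)
  have "inj (\<lambda>i::'n. axis i (1::real))" by (auto simp: inj_on_def axis_eq_axis)
  then show ?thesis unfolding B by (simp add: prod.reindex)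
qed

definition unrank_vec :: "(real, 'm ranked) vec \<Rightarrow> real^'m::finite" where
  "unrank_vec u = (\<chi> i. u $ Abs_ranked i)"

lemma unrank_vec_measurable: "unrank_vec \<in> measurable lborel borel"
proof -
  have "continuous_on UNIV unrank_vec"
    unfolding unrank_vec_def by (intro continuous_on_vec_lambda continuous_intros)
  then have "unrank_vec \<in> borel_measurable borel" by (rule borel_measurable_continuous_onI)
  moreover have "measurable lborel borel = measurable borel (borel :: (real^'m) measure)"
    by (rule measurable_cong_sets) simp_all
  ultimately show ?thesis by simp
qed

lemma distr_unrank_vec:
  "distr lborel borel (unrank_vec :: (real, 'm::finite ranked) vec \<Rightarrow> real^'m) = lborel"
proof (rule lborel_eqI[symmetric])
  fix l u :: "real^'m"
  assume lu: "\<And>b. b \<in> Basis \<Longrightarrow> l \<bullet> b \<le> u \<bullet> b"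
  have lu': "l $ i \<le> u $ i" for i
    using lu[of "axis i 1"] by (simp add: cart_eq_inner_axis Basis_vec_def) (metis)
  define l' where "l' = ((\<chi> j. l $ Rep_ranked j) :: (real, 'm ranked) vec)"
  define u' where "u' = ((\<chi> j. u $ Rep_ranked j) :: (real, 'm ranked) vec)"
  have pre: "unrank_vec -` box l u = box l' u'"
  proof (rule set_eqI)
    fix v :: "(real, 'm ranked) vec"
    have "v \<in> unrank_vec -` box l u \<longleftrightarrow> (\<forall>i. l $ i < v $ Abs_ranked i \<and> v $ Abs_ranked i < u $ i)"
      by (simp add: unrank_vec_def mem_box_cart)
    also have "\<dots> \<longleftrightarrow> (\<forall>j. l $ Rep_ranked j < v $ j \<and> v $ j < u $ Rep_ranked j)"
      by (metis Abs_ranked_inverse Rep_ranked_inverse UNIV_I)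
    also have "\<dots> \<longleftrightarrow> v \<in> box l' u'" by (simp add: l'_def u'_def mem_box_cart)
    finally show "v \<in> unrank_vec -` box l u \<longleftrightarrow> v \<in> box l' u'" .
  qed
  have "emeasure (distr lborel borel unrank_vec) (box l u) = emeasure lborel (box l' u')"
    using emeasure_distr[OF unrank_vec_measurable, of "box l u"] pre by simp
  also have "\<dots> = (\<Prod>b\<in>Basis. (u' - l') \<bullet> b)"
    by (rule emeasure_lborel_box)
      (auto simp: Basis_vec_def l'_def u'_def lu' cart_eq_inner_axis[symmetric])
  also have "\<dots> = (\<Prod>j\<in>UNIV. u $ Rep_ranked j - l $ Rep_ranked j)"
    by (simp add: prod_Basis_cart cart_eq_inner_axis[symmetric] l'_def u'_def)
  also have "\<dots> = (\<Prod>i\<in>UNIV. u $ i - l $ i)"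
    using prod_Rep_ranked[of "\<lambda>i. u $ i - l $ i"] by simp
  also have "\<dots> = (\<Prod>b\<in>Basis. (u - l) \<bullet> b)"
    by (simp add: prod_Basis_cart cart_eq_inner_axis[symmetric])
  finally show "emeasure (distr lborel borel (unrank_vec :: (real, 'm ranked) vec \<Rightarrow> real^'m)) (box l u)
      = (\<Prod>b\<in>Basis. (u - l) \<bullet> b)" .
qed simp

lemma vimage_unrank_vec_cube_slabs:
  fixes g :: "'m::finite \<Rightarrow> 'a \<Rightarrow> real"
  shows "unrank_vec -` cube_slabs A c g \<delta> = cube_slabs A c (\<lambda>j. g (Rep_ranked j)) \<delta>"
proof (rule set_eqI)
  fix u :: "(real, 'm ranked) vec"
  have "(\<forall>i. \<bar>u $ Abs_ranked i\<bar> \<le> 1) \<longleftrightarrow> (\<forall>j. \<bar>u $ j\<bar> \<le> 1)"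
    by (metis Abs_ranked_cases UNIV_I)
  moreover have "(\<Sum>i\<in>UNIV. u $ Abs_ranked i * g i a) = (\<Sum>j\<in>UNIV. u $ j * g (Rep_ranked j) a)" for a
    using sum_Rep_ranked[of "\<lambda>i. u $ Abs_ranked i * g i a"] by (simp add: Rep_ranked_inverse)
  ultimately show "u \<in> unrank_vec -` cube_slabs A c g \<delta> \<longleftrightarrow> u \<in> cube_slabs A c (\<lambda>j. g (Rep_ranked j)) \<delta>"
    by (simp add: cube_slabs_def unrank_vec_def)
qed

lemma measure_cube_slabs_le:
  fixes g :: "'m::finite \<Rightarrow> 'a \<Rightarrow> real"
  assumes "finite A"
    and surj: "\<forall>w. \<exists>v::real^'m. \<forall>a\<in>A. (\<Sum>i\<in>UNIV. v $ i * g i a) = w a"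
    and gram: "det_on A (\<lambda>a b. \<Sum>i\<in>UNIV. g i a * g i b) \<ge> 1"
    and "\<delta> \<ge> 0"
  shows "measure lborel (cube_slabs A c g \<delta>) \<le> (2 * \<delta>) ^ card A * (2 * real CARD('m)) ^ CARD('m)"
proof -
  define g' where "g' = (\<lambda>j a. g (Rep_ranked j) a)"
  have sum_g': "(\<Sum>j\<in>UNIV. v $ Rep_ranked j * g' j a) = (\<Sum>i\<in>UNIV. v $ i * g i a)" for v a
    unfolding g'_def by (rule sum_Rep_ranked)
  have "unrank_vec -` cube_slabs A c g \<delta> = cube_slabs A c g' \<delta>"
    unfolding g'_def by (rule vimage_unrank_vec_cube_slabs)
  moreover have "cube_slabs A c g \<delta> \<in> sets borel"
    by (intro borel_closed compact_imp_closed compact_cube_slabs)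
  ultimately have "measure lborel (cube_slabs A c g \<delta>) = measure lborel (cube_slabs A c g' \<delta>)"
    using measure_distr[OF unrank_vec_measurable, of "cube_slabs A c g \<delta>"]
    by (simp add: distr_unrank_vec)
  also have "\<dots> \<le> (2 * \<delta>) ^ card A * (2 * real CARD('m ranked)) ^ CARD('m ranked)"
  proof -
    have "\<forall>w. \<exists>v::(real, 'm ranked) vec. \<forall>a\<in>A. (\<Sum>i\<in>UNIV. v $ i * g' i a) = w a"
    proof
      fix w
      obtain v :: "real^'m" where "\<forall>a\<in>A. (\<Sum>i\<in>UNIV. v $ i * g i a) = w a" using surj by blast
      then show "\<exists>v::(real, 'm ranked) vec. \<forall>a\<in>A. (\<Sum>i\<in>UNIV. v $ i * g' i a) = w a"
        using sum_g'[of v] by (intro exI[of _ "\<chi> j. v $ Rep_ranked j"]) simp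
    qed
    moreover have "det_on A (\<lambda>a b. \<Sum>i\<in>UNIV. g' i a * g' i b) \<ge> 1"
      using gram unfolding g'_def by (simp add: sum_Rep_ranked[of "\<lambda>i. g i _ * g i _"])
    ultimately have "measure lebesgue (cube_slabs A c g' \<delta>)
        \<le> (2 * \<delta>) ^ card A * (2 * real CARD('m ranked)) ^ CARD('m ranked)"
      by (rule measure_cube_slabs_le_wellorder[OF assms(1) _ _ assms(4)])
    moreover have "cube_slabs A c g' \<delta> \<in> sets borel"
      by (intro borel_closed compact_imp_closed compact_cube_slabs)
    ultimately show ?thesis by simp
  qed
  finally show ?thesis by (simp add: card_ranked)
qed

lemma deriv_perturb:
  fixes \<phi> :: "'m::finite \<Rightarrow> real \<Rightarrow> real"
  assumes "\<And>y. (\<tau> has_real_derivative deriv \<tau> y) (at y)"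
    and "\<And>i y. (\<phi> i has_real_derivative deriv (\<phi> i) y) (at y)"
  shows "deriv (perturb \<tau> \<phi> t) y = deriv \<tau> y + (\<Sum>i\<in>UNIV. t $ i * deriv (\<phi> i) y)"
proof -
  have "((\<lambda>y. \<Sum>i\<in>UNIV. t $ i * \<phi> i y) has_real_derivative (\<Sum>i\<in>UNIV. t $ i * deriv (\<phi> i) y)) (at y)"
    by (rule DERIV_sum) (rule DERIV_cmult, rule assms(2))
  then show ?thesis unfolding perturb_def by (intro DERIV_imp_deriv DERIV_add assms(1))
qed

lemma Sn_perturb:
  fixes \<phi> :: "'m::finite \<Rightarrow> real \<Rightarrow> real"
  assumes "\<And>y. (\<tau> has_real_derivative deriv \<tau> y) (at y)"
    and "\<And>i y. (\<phi> i has_real_derivative deriv (\<phi> i) y) (at y)"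
  shows "Sn El x \<alpha> (perturb \<tau> \<phi> t) = Sn El x \<alpha> \<tau> + (\<Sum>i\<in>UNIV. t $ i * Sn El x \<alpha> (\<phi> i))"
proof -
  define P where "P = (\<lambda>k. pt El x (trunc k \<alpha>))"
  define Q where "Q = (\<lambda>k. deriv (El ^^ k) (P k))"
  have "Sn El x \<alpha> (perturb \<tau> \<phi> t) =
      (\<Sum>k=1..length \<alpha>. (deriv \<tau> (P k) + (\<Sum>i\<in>UNIV. t $ i * deriv (\<phi> i) (P k))) / Q k)"
    unfolding Sn_def P_def Q_def by (simp add: deriv_perturb[OF assms])
  also have "\<dots> = (\<Sum>k=1..length \<alpha>. deriv \<tau> (P k) / Q k) +
      (\<Sum>i\<in>UNIV. t $ i * (\<Sum>k=1..length \<alpha>. deriv (\<phi> i) (P k) / Q k))"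
    by (simp add: add_divide_distrib sum.distrib sum_divide_distrib sum_distrib_left sum.swap[of _ UNIV])
  finally show ?thesis unfolding Sn_def P_def Q_def .
qed

lemma Gmap_unperturbed:
  fixes \<phi> :: "'m::finite \<Rightarrow> real \<Rightarrow> real"
  assumes "\<And>i y. (\<phi> i has_real_derivative deriv (\<phi> i) y) (at y)"
  shows "Gmap El x A (\<lambda>_. 0) \<phi> v \<alpha> = (if \<alpha> \<in> A then \<Sum>i\<in>UNIV. v $ i * Sn El x \<alpha> (\<phi> i) else 0)"
proof -
  have d0: "deriv (\<lambda>_. 0::real) y = 0" for y by (rule DERIV_imp_deriv) (rule DERIV_const)
  then have "((\<lambda>_. 0::real) has_real_derivative deriv (\<lambda>_. 0::real) y) (at y)" for y by simp
  from Sn_perturb[OF this assms, where El = El and x = x and \<alpha> = \<alpha> and t = v] show ?thesis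
    unfolding Gmap_def by (simp add: Sn_def d0)
qed

lemma jac_aff_Gmap_ge_1D:
  fixes \<phi> :: "'m::finite \<Rightarrow> real \<Rightarrow> real"
  assumes d: "\<And>i y. (\<phi> i has_real_derivative deriv (\<phi> i) y) (at y)"
    and J: "jac_aff A (Gmap El x A (\<lambda>_. 0) \<phi>) \<ge> 1"
  shows "\<forall>w. \<exists>v::real^'m. \<forall>\<alpha>\<in>A. (\<Sum>i\<in>UNIV. v $ i * Sn El x \<alpha> (\<phi> i)) = w \<alpha>"
    and "det_on A (\<lambda>\<alpha> \<beta>. \<Sum>i\<in>UNIV. Sn El x \<alpha> (\<phi> i) * Sn El x \<beta> (\<phi> i)) \<ge> 1"
proof -
  define L where "L = (\<lambda>v \<alpha>. Gmap El x A (\<lambda>_. 0) \<phi> v \<alpha> - Gmap El x A (\<lambda>_. 0) \<phi> 0 \<alpha>)"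
  have L: "L v \<alpha> = (\<Sum>i\<in>UNIV. v $ i * Sn El x \<alpha> (\<phi> i))" if "\<alpha> \<in> A" for v \<alpha>
    unfolding L_def using that by (simp add: Gmap_unperturbed[OF d])
  have L_axis: "L (axis i 1) \<alpha> = Sn El x \<alpha> (\<phi> i)" if "\<alpha> \<in> A" for \<alpha> i
    using that by (simp add: L axis_def if_distrib[where f = "\<lambda>z. z * _"] cong: if_cong)
  have jac: "jac_aff A (Gmap El x A (\<lambda>_. 0) \<phi>) = (if \<forall>w. \<exists>v. \<forall>\<alpha>\<in>A. L v \<alpha> = w \<alpha>
      then sqrt (det_on A (\<lambda>\<alpha> \<beta>. \<Sum>i\<in>UNIV. L (axis i 1) \<alpha> * L (axis i 1) \<beta>)) else 0)"
    by (simp only: jac_aff_def L_def Let_def)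
  have onto: "\<forall>w. \<exists>v. \<forall>\<alpha>\<in>A. L v \<alpha> = w \<alpha>"
    using J jac by (cases "\<forall>w. \<exists>v. \<forall>\<alpha>\<in>A. L v \<alpha> = w \<alpha>") auto
  then show "\<forall>w. \<exists>v::real^'m. \<forall>\<alpha>\<in>A. (\<Sum>i\<in>UNIV. v $ i * Sn El x \<alpha> (\<phi> i)) = w \<alpha>"
    using L by simp
  have "det_on A (\<lambda>\<alpha> \<beta>. \<Sum>i\<in>UNIV. L (axis i 1) \<alpha> * L (axis i 1) \<beta>) =
      det_on A (\<lambda>\<alpha> \<beta>. \<Sum>i\<in>UNIV. Sn El x \<alpha> (\<phi> i) * Sn El x \<beta> (\<phi> i))"
    by (rule det_on_cong) (simp add: L_axis)
  then show "det_on A (\<lambda>\<alpha> \<beta>. \<Sum>i\<in>UNIV. Sn El x \<alpha> (\<phi> i) * Sn El x \<beta> (\<phi> i)) \<ge> 1"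
    using J onto unfolding jac by (simp add: real_sqrt_ge_1_iff)
qed

section \<open>Grids, Markov's inequality and Borel--Cantelli\<close>

lemma card_grid_le:
  assumes "K > 0" "p > 0"
  shows "finite {x \<in> {0..<p}. real K * x / p \<in> \<int>}" and "card {x \<in> {0..<p}. real K * x / p \<in> \<int>} \<le> K"
proof -
  have sub: "{x \<in> {0..<p}. real K * x / p \<in> \<int>} \<subseteq> (\<lambda>k. p * real k / real K) ` {..<K}"
  proof
    fix x assume "x \<in> {x \<in> {0..<p}. real K * x / p \<in> \<int>}"
    then obtain m where x: "0 \<le> x" "x < p" "real K * x / p = of_int m"
      by (auto elim: Ints_cases)
    have "0 \<le> real K * x / p" "real K * x / p < real K"
      using x(1,2) assms by (auto simp: divide_less_eq)
    then have "0 \<le> m" "m < int K" using x(3) by linarith+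
    moreover have "x = p * real (nat m) / real K"
      using x(3) \<open>0 \<le> m\<close> assms by (simp add: field_simps)
    ultimately show "x \<in> (\<lambda>k. p * real k / real K) ` {..<K}"
      by (intro image_eqI[of _ _ "nat m"]) auto
  qed
  then show "finite {x \<in> {0..<p}. real K * x / p \<in> \<int>}" by (rule finite_subset) simp
  have "card {x \<in> {0..<p}. real K * x / p \<in> \<int>} \<le> card ((\<lambda>k. p * real k / real K) ` {..<K})"
    using sub by (rule card_mono[rotated]) simp
  also have "\<dots> \<le> K" using card_image_le[of "{..<K}"] by simp
  finally show "card {x \<in> {0..<p}. real K * x / p \<in> \<int>} \<le> K" .
qed

lemma Tset_finite_card:
  assumes "\<lceil>2 * Lam\<rceil> \<ge> 1"
  shows "finite (Tset Lam n)" "real (card (Tset Lam n)) \<le> real (nat \<lceil>2 * Lam\<rceil>) ^ n"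
proof -
  have pos: "nat \<lceil>2 * Lam\<rceil> ^ n > 0" using assms by simp
  have T: "Tset Lam n = {x \<in> {0..<1}. real (nat \<lceil>2 * Lam\<rceil> ^ n) * x / 1 \<in> \<int>}"
    using assms unfolding Tset_def by simp
  show "finite (Tset Lam n)" unfolding T by (rule card_grid_le(1)[OF pos]) simp
  show "real (card (Tset Lam n)) \<le> real (nat \<lceil>2 * Lam\<rceil>) ^ n"
    unfolding T of_nat_power[symmetric] of_nat_le_iff by (rule card_grid_le(2)[OF pos]) simp
qed

lemma Thset_finite_card:
  assumes "\<lceil>2 * Lam\<rceil> \<ge> 1"
  shows "finite (Thset Lam n)" "real (card (Thset Lam n)) \<le> real (nat \<lceil>2 * Lam\<rceil>) ^ n"
proof -
  have pos: "nat \<lceil>2 * Lam\<rceil> ^ n > 0" using assms by simp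
  have T: "Thset Lam n = {\<theta> \<in> {0..<2 * pi}. real (nat \<lceil>2 * Lam\<rceil> ^ n) * \<theta> / (2 * pi) \<in> \<int>}"
    using assms unfolding Thset_def by simp
  show "finite (Thset Lam n)" unfolding T by (rule card_grid_le(1)[OF pos]) simp
  show "real (card (Thset Lam n)) \<le> real (nat \<lceil>2 * Lam\<rceil>) ^ n"
    unfolding T of_nat_power[symmetric] of_nat_le_iff by (rule card_grid_le(2)[OF pos]) simp
qed

lemma measure_indicator_sum_ge_le:
  fixes B :: "'i \<Rightarrow> 'a::euclidean_space set"
  assumes "finite I" and B: "\<And>i. i \<in> I \<Longrightarrow> B i \<in> sets lborel" "\<And>i. i \<in> I \<Longrightarrow> B i \<subseteq> C"
    and C: "C \<in> sets lborel" "emeasure lborel C < \<infinity>" and "M > 0"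
  shows "{t \<in> C. M \<le> (\<Sum>i\<in>I. indicator (B i) t)} \<in> sets lborel"
    and "measure lborel {t \<in> C. M \<le> (\<Sum>i\<in>I. indicator (B i) t)} \<le> (\<Sum>i\<in>I. measure lborel (B i)) / M"
proof -
  define F where "F = (\<lambda>t. (\<Sum>i\<in>I. indicator (B i) t) :: real)"
  define Y where "Y = {t \<in> C. M \<le> F t}"
  have F: "F \<in> borel_measurable lborel"
    unfolding F_def using B by (intro borel_measurable_sum borel_measurable_indicator) auto
  have "Y = C \<inter> (F -` {M..} \<inter> space lborel)" unfolding Y_def by auto
  then show Y: "{t \<in> C. M \<le> (\<Sum>i\<in>I. indicator (B i) t)} \<in> sets lborel"
    using measurable_sets[OF F, of "{M..}"] C(1) unfolding Y_def F_def by simp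
  have fin_measure: "emeasure lborel S < \<infinity>" if "S \<in> sets lborel" "S \<subseteq> C" for S
    using emeasure_mono[OF that(2) C(1)] C(2) by (simp add: less_le_trans)
  have "M * indicator Y t \<le> F t" for t
    unfolding Y_def F_def by (auto simp: indicator_def sum_nonneg)
  then have "integral\<^sup>L lborel (\<lambda>t. M * indicator Y t) \<le> integral\<^sup>L lborel F"
    using Y fin_measure[of Y] B fin_measure unfolding F_def
    by (intro integral_mono integrable_sum integrable_real_indicator integrable_mult_right)
      (auto simp: Y_def F_def)
  then have "M * measure lborel Y \<le> integral\<^sup>L lborel F" by simp
  also have "integral\<^sup>L lborel F = (\<Sum>i\<in>I. measure lborel (B i))"
    unfolding F_def using B fin_measure by (subst Bochner_Integration.integral_sum) auto
  finally show "measure lborel {t \<in> C. M \<le> (\<Sum>i\<in>I. indicator (B i) t)} \<le> (\<Sum>i\<in>I. measure lborel (B i)) / M"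
    using \<open>M > 0\<close> unfolding Y_def F_def by (simp add: pos_le_divide_eq mult.commute)
qed

lemma infinitely_often_null_of_geometric:
  fixes Z :: "nat \<Rightarrow> 'a::euclidean_space set"
  assumes Z: "\<And>n. Z n \<in> sets lborel" "\<And>n. Z n \<subseteq> cbox u v"
    and bound: "\<And>n. measure lborel (Z n) \<le> K * \<theta> ^ n" and "0 \<le> \<theta>" "\<theta> < 1"
  shows "{t. infinite {n. t \<in> Z n}} \<in> null_sets lebesgue"
proof -
  have fin: "emeasure lborel (Z n) < \<infinity>" for n
  proof -
    have "emeasure lborel (Z n) \<le> emeasure lborel (cbox u v)"
      using Z(2) by (intro emeasure_mono) auto
    then show ?thesis using emeasure_lborel_cbox_finite[of u v] by order
  qed
  have "summable (\<lambda>n. measure lborel (Z n))"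
  proof (rule summable_comparison_test')
    show "summable (\<lambda>n. K * \<theta> ^ n)" using assms(4,5) by (intro summable_mult summable_geometric) auto
    show "norm (measure lborel (Z n)) \<le> K * \<theta> ^ n" for n using bound[of n] by simp
  qed
  then have "limsup Z \<in> null_sets lborel"
    by (rule borel_cantelli_limsup1[OF Z(1) fin])
  moreover have "{t. infinite {n. t \<in> Z n}} \<subseteq> limsup Z"
    unfolding limsup_INF_SUP infinite_nat_iff_unbounded_le by auto
  ultimately show ?thesis
    by (intro null_sets_completion_subset[OF _ null_sets_completionI])
qed

lemma exp_pow_le_inverse_pow:
  assumes "rho > 0" "c \<ge> 1" "real N \<ge> 6 / rho * ln c"
  shows "exp (- (2 * rho / 3) * real n) ^ N \<le> (1 / c ^ 4) ^ n"
proof -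
  have "4 * ln c \<le> (2 * rho / 3) * real N"
    using mult_left_mono[OF assms(3), of "2 * rho / 3"] assms(1) by (simp add: field_simps)
  then have le: "4 * ln c * real n \<le> (2 * rho / 3) * real N * real n"
    by (intro mult_right_mono) auto
  have "exp (- (2 * rho / 3) * real n) ^ N = exp (real N * (- (2 * rho / 3) * real n))"
    by (rule exp_of_nat_mult[symmetric])
  also have "\<dots> \<le> exp (real n * (- 4 * ln c))"
    using le by (simp add: algebra_simps)
  also have "\<dots> = (1 / c ^ 4) ^ n"
  proof -
    have "ln ((1 / c ^ 4) ^ n) = real n * (- 4 * ln c)"
      using assms(2) by (simp add: ln_realpow ln_div)
    then show ?thesis using assms(2) by (metis exp_ln zero_less_divide_1_iff zero_less_power
        less_le_trans zero_less_one)
  qed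
  finally show ?thesis .
qed

section \<open>The exceptional parameters\<close>

context expanding_circle_map
begin

lemma l_pos: "l > 0"
  using strict_mono_El[THEN strict_monoD, of 0 1] El_add_1[of 0] by simp

lemma ceiling_2Lam_ge_3: "\<lceil>2 * Lam\<rceil> \<ge> 3"
proof -
  have "2 < 2 * Lam" using lam_gt_1 deriv_El_ge[of 0] deriv_El_le[of 0] by linarith
  then show ?thesis by linarith
qed

end

locale recurrence_setting = expanding_circle_map r l lam Lam El
  for r l :: nat and lam Lam :: real and El :: "real \<Rightarrow> real" +
  fixes D :: "(real \<Rightarrow> real) set" and R rho :: real and J q N :: nat and a b :: "nat \<Rightarrow> real"
    and \<tau> :: "real \<Rightarrow> real" and \<phi> :: "'m::finite \<Rightarrow> real \<Rightarrow> real"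
  assumes \<tau>_deriv: "\<And>y. (\<tau> has_real_derivative deriv \<tau> y) (at y)"
    and \<phi>_deriv: "\<And>i y. (\<phi> i has_real_derivative deriv (\<phi> i) y) (at y)"
    and R_pos: "R > 0" and rho_pos: "rho > 0" and J_pos: "J \<ge> 1"
    and short: "\<forall>j\<in>{1..J}. b j - a j < rho / 3"
    and N_def: "N = nat \<lceil>6 / rho * ln (real_of_int \<lceil>2 * Lam\<rceil>)\<rceil>"
    and prop34: "\<forall>x\<in>{0..<1}. \<forall>B. B \<subseteq> words l q \<and> card B \<ge> N * (q + 1) \<longrightarrow>
         (\<exists>B'\<subseteq>B. card B' = N \<and>
            (\<forall>n\<ge>q. \<forall>A\<subseteq>words l n. bij_betw (trunc q) A B' \<longrightarrow>
               jac_aff A (Gmap El x A (\<lambda>_. 0) \<phi>) \<ge> 1))"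
begin

definition fibre_words :: "real \<Rightarrow> nat \<Rightarrow> nat list \<Rightarrow> nat \<Rightarrow> nat list set" where
  "fibre_words x j \<beta> n = {\<alpha> \<in> words l n. trunc q \<alpha> = \<beta> \<and>
     exp (a j * real n) \<le> deriv (El ^^ n) (pt El x \<alpha>) \<and> deriv (El ^^ n) (pt El x \<alpha>) \<le> exp (b j * real n)}"

definition tolerance :: "nat \<Rightarrow> nat \<Rightarrow> real" where
  "tolerance j n = exp (- a j * real n) * (R / (lam - 1))"

definition near_params :: "real \<Rightarrow> real \<Rightarrow> nat \<Rightarrow> nat \<Rightarrow> nat list set \<Rightarrow> (real^'m) set" where
  "near_params x \<theta> j n A =
     cube_slabs A (\<lambda>\<alpha>. Sn El x \<alpha> \<tau> - tan \<theta>) (\<lambda>i \<alpha>. Sn El x \<alpha> (\<phi> i)) (tolerance j n)"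

definition admissible_prefixes :: "nat list set set" where
  "admissible_prefixes = {B. B \<subseteq> words l q \<and> card B = 2 * (q + 1) * N}"

definition selected :: "real \<Rightarrow> nat list set \<Rightarrow> nat list set" where
  "selected x B = (SOME B'. B' \<subseteq> B \<and> card B' = N \<and> (\<forall>n\<ge>q. \<forall>A\<subseteq>words l n.
     bij_betw (trunc q) A B' \<longrightarrow> jac_aff A (Gmap El x A (\<lambda>_. 0) \<phi>) \<ge> 1))"

definition min_count :: "nat \<Rightarrow> real" where
  "min_count n = exp (rho * real n) / real l ^ q / (2 * real J)"

definition bad_params :: "real \<Rightarrow> real \<Rightarrow> nat \<Rightarrow> nat list set \<Rightarrow> nat \<Rightarrow> (real^'m) set" where
  "bad_params x \<theta> j B n = {t \<in> cbox (-1) 1. min_count n ^ N \<le>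
     (\<Sum>f \<in> PiE (selected x B) (\<lambda>\<beta>. fibre_words x j \<beta> n).
        indicator (near_params x \<theta> j n (f ` selected x B)) t)}"

definition bad_index :: "nat \<Rightarrow> (real \<times> real \<times> nat \<times> nat list set) set" where
  "bad_index n = Tset Lam n \<times> Thset Lam n \<times> {1..J} \<times> admissible_prefixes"

definition bad_set :: "nat \<Rightarrow> (real^'m) set" where
  "bad_set n = (\<Union>(x, \<theta>, j, B) \<in> bad_index n. bad_params x \<theta> j B n)"

lemma selected_spec:
  assumes "x \<in> {0..<1}" "B \<in> admissible_prefixes"
  shows "selected x B \<subseteq> B" "card (selected x B) = N"
    and "\<And>n A. n \<ge> q \<Longrightarrow> A \<subseteq> words l n \<Longrightarrow> bij_betw (trunc q) A (selected x B) \<Longrightarrow>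
      jac_aff A (Gmap El x A (\<lambda>_. 0) \<phi>) \<ge> 1"
proof -
  have "N * (q + 1) \<le> card B" using assms(2) unfolding admissible_prefixes_def by simp
  then have "\<exists>B'. B' \<subseteq> B \<and> card B' = N \<and> (\<forall>n\<ge>q. \<forall>A\<subseteq>words l n.
      bij_betw (trunc q) A B' \<longrightarrow> jac_aff A (Gmap El x A (\<lambda>_. 0) \<phi>) \<ge> 1)"
    using prop34 assms unfolding admissible_prefixes_def by blast
  from someI_ex[OF this] show "selected x B \<subseteq> B" "card (selected x B) = N"
    and "\<And>n A. n \<ge> q \<Longrightarrow> A \<subseteq> words l n \<Longrightarrow> bij_betw (trunc q) A (selected x B) \<Longrightarrow>
      jac_aff A (Gmap El x A (\<lambda>_. 0) \<phi>) \<ge> 1"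
    unfolding selected_def by blast+
qed

lemma finite_selected:
  assumes "x \<in> {0..<1}" "B \<in> admissible_prefixes"
  shows "finite (selected x B)"
proof -
  have "selected x B \<subseteq> words l q"
    using selected_spec(1)[OF assms] assms(2) unfolding admissible_prefixes_def by blast
  then show ?thesis by (rule finite_subset[OF _ finite_words])
qed

lemma finite_fibre_words: "finite (fibre_words x j \<beta> n)"
  unfolding fibre_words_def using finite_words by simp

lemma tolerance_nonneg: "tolerance j n \<ge> 0"
  unfolding tolerance_def using R_pos lam_gt_1 by simp

lemma min_count_pos: "min_count n > 0"
  unfolding min_count_def using J_pos l_pos by simp

lemma near_paramsI:
  assumes "t \<in> cbox (-1) 1"
    and "\<And>\<alpha>. \<alpha> \<in> A \<Longrightarrow> \<bar>Sn El x \<alpha> (perturb \<tau> \<phi> t) - tan \<theta>\<bar> \<le> tolerance j n"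
  shows "t \<in> near_params x \<theta> j n A"
  using assms Sn_perturb[where \<phi> = \<phi>, OF \<tau>_deriv \<phi>_deriv]
  unfolding near_params_def cube_slabs_def cube_eq_cbox[symmetric] by (simp add: algebra_simps)

lemma Xset_imp_bad_set:
  assumes t: "t \<in> cbox (-1) 1" and X: "perturb \<tau> \<phi> t \<in> Xset El l lam Lam D R rho J a b q N n"
  shows "t \<in> bad_set n"
proof -
  obtain x \<theta> j B Sg where x: "x \<in> Tset Lam n" and \<theta>: "\<theta> \<in> Thset Lam n" and j: "j \<in> {1..J}"
    and BW: "B \<subseteq> words l q" and cB: "card B = 2 * (q + 1) * N"
    and Sg: "\<forall>\<beta>\<in>B. Sg \<beta> \<subseteq> words l n \<and>
      real (card (Sg \<beta>)) \<ge> exp (rho * real n) / real l ^ q / (2 * real J)"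
    and Sg_words: "\<forall>\<beta>\<in>B. \<forall>\<alpha>\<in>Sg \<beta>. trunc q \<alpha> = \<beta> \<and>
      exp (a j * real n) \<le> deriv (El ^^ n) (pt El x \<alpha>) \<and> deriv (El ^^ n) (pt El x \<alpha>) \<le> exp (b j * real n) \<and>
      \<bar>Sn El x \<alpha> (perturb \<tau> \<phi> t) - tan \<theta>\<bar> \<le> exp (- a j * real n) * (R / (lam - 1))"
    using X unfolding Xset_def mem_Collect_eq by blast
  have B: "B \<in> admissible_prefixes" using BW cB unfolding admissible_prefixes_def by simp
  note Sg = Sg[unfolded min_count_def[symmetric]]
    and Sg_words = Sg_words[unfolded tolerance_def[symmetric]]
  have x01: "x \<in> {0..<1}" using x unfolding Tset_def by auto
  define B' where "B' = selected x B"
  have B': "B' \<subseteq> B" "finite B'" "card B' = N"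
    using selected_spec[OF x01 B] finite_selected[OF x01 B] unfolding B'_def by auto
  have Sg_fibre: "Sg \<beta> \<subseteq> fibre_words x j \<beta> n" if "\<beta> \<in> B'" for \<beta>
    using Sg Sg_words that B'(1) unfolding fibre_words_def by blast
  have "min_count n ^ N = (\<Prod>\<beta>\<in>B'. min_count n)" using B'(3) by simp
  also have "\<dots> \<le> (\<Prod>\<beta>\<in>B'. real (card (Sg \<beta>)))"
    using Sg B'(1) min_count_pos by (intro prod_mono) (auto simp: less_imp_le)
  also have "\<dots> = real (card (PiE B' Sg))" by (simp add: card_PiE B'(2))
  also have "\<dots> = (\<Sum>f\<in>PiE B' Sg. indicator (near_params x \<theta> j n (f ` B')) t)"
  proof -
    have "t \<in> near_params x \<theta> j n (f ` B')" if "f \<in> PiE B' Sg" for f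
      using that B'(1) Sg_words by (intro near_paramsI[OF t]) (auto simp: PiE_def Pi_def)
    then show ?thesis by simp
  qed
  also have "\<dots> \<le> (\<Sum>f\<in>PiE B' (\<lambda>\<beta>. fibre_words x j \<beta> n). indicator (near_params x \<theta> j n (f ` B')) t)"
    using B'(2) finite_fibre_words Sg_fibre by (intro sum_mono2 finite_PiE PiE_mono) auto
  finally have "t \<in> bad_params x \<theta> j B n"
    using t unfolding bad_params_def B'_def by simp
  then show ?thesis
    unfolding bad_set_def bad_index_def using x \<theta> j B by blast
qed

lemma grid_base_ge_3: "real (nat \<lceil>2 * Lam\<rceil>) \<ge> 3"
  using ceiling_2Lam_ge_3 by linarith

lemma N_ge: "real N \<ge> 6 / rho * ln (real (nat \<lceil>2 * Lam\<rceil>))"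
proof -
  have c: "real_of_int \<lceil>2 * Lam\<rceil> = real (nat \<lceil>2 * Lam\<rceil>)" using ceiling_2Lam_ge_3 by simp
  have "6 / rho * ln (real (nat \<lceil>2 * Lam\<rceil>)) \<le> of_int \<lceil>6 / rho * ln (real (nat \<lceil>2 * Lam\<rceil>))\<rceil>"
    by (rule le_of_int_ceiling)
  also have "\<dots> \<le> real (nat \<lceil>6 / rho * ln (real (nat \<lceil>2 * Lam\<rceil>))\<rceil>)" by simp
  finally show ?thesis unfolding N_def c .
qed

lemma N_pos: "N \<ge> 1"
proof -
  have "ln (real (nat \<lceil>2 * Lam\<rceil>)) > 0" using grid_base_ge_3 by (intro ln_gt_zero) linarith
  then have "6 / rho * ln (real (nat \<lceil>2 * Lam\<rceil>)) > 0" using rho_pos by simp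
  then show ?thesis using N_ge by linarith
qed

lemma measure_near_params_le:
  assumes x: "x \<in> {0..<1}" and B: "B \<in> admissible_prefixes"
    and f: "f \<in> PiE (selected x B) (\<lambda>\<beta>. fibre_words x j \<beta> n)"
  shows "measure lborel (near_params x \<theta> j n (f ` selected x B))
    \<le> (2 * tolerance j n) ^ N * (2 * real CARD('m)) ^ CARD('m)"
proof -
  define B' where "B' = selected x B"
  have B': "B' \<subseteq> words l q" "finite B'" "card B' = N"
    using selected_spec[OF x B] finite_selected[OF x B] B unfolding B'_def admissible_prefixes_def by auto
  have fW: "f \<beta> \<in> fibre_words x j \<beta> n" if "\<beta> \<in> B'" for \<beta>
    using f that unfolding B'_def by auto
  then have trunc_f: "trunc q (f \<beta>) = \<beta>" if "\<beta> \<in> B'" for \<beta>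
    using that unfolding fibre_words_def by auto
  have "inj_on f B'" by (metis inj_onI trunc_f)
  then have card: "card (f ` B') = N" using B'(3) by (simp add: card_image)
  have bij: "bij_betw (trunc q) (f ` B') B'"
    by (rule bij_betw_imageI) (auto simp: inj_on_def trunc_f image_image)
  have words: "f ` B' \<subseteq> words l n" using fW unfolding fibre_words_def by auto
  have "q \<le> n"
  proof -
    obtain \<beta> where "\<beta> \<in> B'" using B'(3) N_pos by fastforce
    then have "length \<beta> = q" "length (f \<beta>) = n" "trunc q (f \<beta>) = \<beta>"
      using B'(1) words trunc_f unfolding words_def by auto
    then show ?thesis unfolding trunc_def by (metis diff_diff_cancel diff_le_self length_drop)
  qed
  then have jac: "jac_aff (f ` B') (Gmap El x (f ` B') (\<lambda>_. 0) \<phi>) \<ge> 1"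
    using selected_spec(3)[OF x B] words bij unfolding B'_def by blast
  show ?thesis
    using measure_cube_slabs_le[OF finite_imageI[OF B'(2)] jac_aff_Gmap_ge_1D[OF \<phi>_deriv jac]
        tolerance_nonneg[of j n], where c = "\<lambda>\<alpha>. Sn El x \<alpha> \<tau> - tan \<theta>"]
    unfolding near_params_def B'_def[symmetric] card by simp
qed

lemma card_fibre_choices_le:
  assumes C: "\<And>x n Bd. x \<in> {0..<1} \<Longrightarrow> Bd > 0 \<Longrightarrow>
      real (card {\<alpha>\<in>words l n. deriv (El ^^ n) (pt El x \<alpha>) \<le> Bd}) \<le> C * Bd"
    and x: "x \<in> {0..<1}" and B: "B \<in> admissible_prefixes"
  shows "real (card (PiE (selected x B) (\<lambda>\<beta>. fibre_words x j \<beta> n))) \<le> (C * exp (b j * real n)) ^ N"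
proof -
  have "real (card (fibre_words x j \<beta> n)) \<le> C * exp (b j * real n)" for \<beta>
  proof -
    have "fibre_words x j \<beta> n \<subseteq> {\<alpha>\<in>words l n. deriv (El ^^ n) (pt El x \<alpha>) \<le> exp (b j * real n)}"
      unfolding fibre_words_def by auto
    then have "card (fibre_words x j \<beta> n)
        \<le> card {\<alpha>\<in>words l n. deriv (El ^^ n) (pt El x \<alpha>) \<le> exp (b j * real n)}"
      by (rule card_mono[rotated]) (simp add: finite_words)
    moreover have "real (card {\<alpha>\<in>words l n. deriv (El ^^ n) (pt El x \<alpha>) \<le> exp (b j * real n)})
        \<le> C * exp (b j * real n)"
      by (rule C[OF x]) simp
    ultimately show ?thesis by (meson of_nat_le_iff order_trans)
  qed
  then have "(\<Prod>\<beta>\<in>selected x B. real (card (fibre_words x j \<beta> n)))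
      \<le> (\<Prod>\<beta>\<in>selected x B. C * exp (b j * real n))"
    by (intro prod_mono) auto
  then show ?thesis
    using selected_spec(2)[OF x B] finite_selected[OF x B] by (simp add: card_PiE)
qed

lemma choices_ratio_le:
  assumes "C > 0" "j \<in> {1..J}"
  shows "C * exp (b j * real n) * (2 * tolerance j n) / min_count n
    \<le> C * (2 * (R / (lam - 1))) * (real l ^ q * (2 * real J)) * exp (- (2 * rho / 3) * real n)"
proof -
  have "(b j - a j - rho) * real n = b j * real n + (- a j * real n) - rho * real n"
    by (simp add: algebra_simps)
  then have e: "exp ((b j - a j - rho) * real n)
      = exp (b j * real n) * exp (- a j * real n) / exp (rho * real n)"
    by (simp only: exp_diff exp_add)
  have "C * exp (b j * real n) * (2 * tolerance j n) / min_count n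
      = C * (2 * (R / (lam - 1))) * (real l ^ q * (2 * real J)) * exp ((b j - a j - rho) * real n)"
    using l_pos J_pos lam_gt_1 unfolding e tolerance_def min_count_def by (simp add: field_simps)
  also have "\<dots> \<le> C * (2 * (R / (lam - 1))) * (real l ^ q * (2 * real J)) * exp (- (2 * rho / 3) * real n)"
  proof -
    have "b j - a j - rho \<le> - (2 * rho / 3)" using short assms(2) by fastforce
    then have "(b j - a j - rho) * real n \<le> - (2 * rho / 3) * real n"
      by (rule mult_right_mono) simp
    then have "exp ((b j - a j - rho) * real n) \<le> exp (- (2 * rho / 3) * real n)" by simp
    then show ?thesis using assms(1) R_pos lam_gt_1 by (intro mult_left_mono) auto
  qed
  finally show ?thesis .
qed

lemma measure_bad_params_le:
  fixes C :: real
  defines "K \<equiv> C * (2 * (R / (lam - 1))) * (real l ^ q * (2 * real J))"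
  assumes "C > 0"
    and count: "\<And>x n Bd. x \<in> {0..<1} \<Longrightarrow> Bd > 0 \<Longrightarrow>
      real (card {\<alpha>\<in>words l n. deriv (El ^^ n) (pt El x \<alpha>) \<le> Bd}) \<le> C * Bd"
    and x: "x \<in> {0..<1}" and j: "j \<in> {1..J}" and B: "B \<in> admissible_prefixes"
  shows "bad_params x \<theta> j B n \<in> sets lborel"
    and "measure lborel (bad_params x \<theta> j B n)
      \<le> (2 * real CARD('m)) ^ CARD('m) * (K * exp (- (2 * rho / 3) * real n)) ^ N"
proof -
  define PI where "PI = PiE (selected x B) (\<lambda>\<beta>. fibre_words x j \<beta> n)"
  define Kb where "Kb = (2 * real CARD('m)) ^ CARD('m)"
  have fin: "finite PI"
    unfolding PI_def using finite_selected[OF x B] finite_fibre_words by (intro finite_PiE) auto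
  define Box where "Box f = near_params x \<theta> j n (f ` selected x B)" for f
  have near: "Box f \<in> sets lborel" "Box f \<subseteq> cbox (-1) 1" for f
    unfolding Box_def near_params_def cube_eq_cbox[symmetric]
    by (simp_all add: borel_compact compact_cube_slabs cube_slabs_subset_cube)
  have M: "min_count n ^ N > 0" using min_count_pos by simp
  have cube: "cbox (-1::real^'m) 1 \<in> sets lborel" by simp
  note markov = measure_indicator_sum_ge_le[where B = Box, OF fin near cube emeasure_lborel_cbox_finite M]
  show "bad_params x \<theta> j B n \<in> sets lborel"
    using markov(1) unfolding bad_params_def PI_def Box_def .
  have "measure lborel (bad_params x \<theta> j B n)
      \<le> (\<Sum>f\<in>PI. measure lborel (near_params x \<theta> j n (f ` selected x B))) / min_count n ^ N"
    using markov(2) unfolding bad_params_def PI_def Box_def .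
  also have "\<dots> \<le> (\<Sum>f\<in>PI. (2 * tolerance j n) ^ N * Kb) / min_count n ^ N"
    unfolding PI_def Kb_def using M
    by (intro divide_right_mono sum_mono measure_near_params_le[OF x B]) auto
  also have "\<dots> \<le> (C * exp (b j * real n)) ^ N * ((2 * tolerance j n) ^ N * Kb) / min_count n ^ N"
    using card_fibre_choices_le[OF count x B, of j n] M tolerance_nonneg unfolding PI_def Kb_def
    by (simp add: divide_right_mono mult_right_mono)
  also have "\<dots> = Kb * (C * exp (b j * real n) * (2 * tolerance j n) / min_count n) ^ N"
    by (simp add: power_mult_distrib power_divide)
  also have "\<dots> \<le> Kb * (K * exp (- (2 * rho / 3) * real n)) ^ N"
  proof -
    have "0 \<le> C * exp (b j * real n) * (2 * tolerance j n) / min_count n"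
      using \<open>C > 0\<close> tolerance_nonneg[of j n] min_count_pos[of n] by simp
    then show ?thesis
      using choices_ratio_le[OF \<open>C > 0\<close> j, of n] unfolding K_def Kb_def
      by (intro mult_left_mono power_mono) auto
  qed
  finally show "measure lborel (bad_params x \<theta> j B n)
      \<le> (2 * real CARD('m)) ^ CARD('m) * (K * exp (- (2 * rho / 3) * real n)) ^ N"
    unfolding Kb_def .
qed

lemma finite_admissible_prefixes: "finite admissible_prefixes"
  unfolding admissible_prefixes_def
  by (rule finite_subset[of _ "Pow (words l q)"]) (auto simp: finite_words)

lemma finite_bad_index: "finite (bad_index n)"
  using Tset_finite_card(1) Thset_finite_card(1) ceiling_2Lam_ge_3 finite_admissible_prefixes
  unfolding bad_index_def by simp

lemma card_bad_index_le:
  "real (card (bad_index n))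
    \<le> real (nat \<lceil>2 * Lam\<rceil>) ^ n * real (nat \<lceil>2 * Lam\<rceil>) ^ n * (real J * real (card admissible_prefixes))"
proof -
  have ceil: "\<lceil>2 * Lam\<rceil> \<ge> 1" using ceiling_2Lam_ge_3 by simp
  define P where "P = real J * real (card admissible_prefixes)"
  have "real (card (Tset Lam n)) * real (card (Thset Lam n))
      \<le> real (nat \<lceil>2 * Lam\<rceil>) ^ n * real (nat \<lceil>2 * Lam\<rceil>) ^ n"
    using Tset_finite_card[OF ceil] Thset_finite_card[OF ceil] by (intro mult_mono) auto
  then have "real (card (Tset Lam n)) * real (card (Thset Lam n)) * P
      \<le> real (nat \<lceil>2 * Lam\<rceil>) ^ n * real (nat \<lceil>2 * Lam\<rceil>) ^ n * P"
    by (rule mult_right_mono) (simp add: P_def)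
  then show ?thesis unfolding bad_index_def P_def by (simp add: card_cartesian_product mult.assoc)
qed

lemma grid_growth_times_decay_le:
  "c ^ n * c ^ n * exp (- (2 * rho / 3) * real n) ^ N \<le> (1 / c ^ 2) ^ n"
  if "c = real (nat \<lceil>2 * Lam\<rceil>)"
proof -
  have c: "c \<ge> 3" using grid_base_ge_3 that by simp
  have "c ^ n * c ^ n * exp (- (2 * rho / 3) * real n) ^ N \<le> c ^ n * c ^ n * (1 / c ^ 4) ^ n"
    using exp_pow_le_inverse_pow[OF rho_pos _ N_ge[folded that]] c by (intro mult_left_mono) auto
  also have "\<dots> = (c * c * (1 / c ^ 4)) ^ n" by (simp only: power_mult_distrib)
  also have "c * c * (1 / c ^ 4) = 1 / c ^ 2" using c by (simp add: power2_eq_square power4_eq_xxxx)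
  finally show ?thesis .
qed

lemma measure_bad_set_le:
  obtains K where "\<And>n. bad_set n \<in> sets lborel"
    and "\<And>n. measure lborel (bad_set n) \<le> K * (1 / real (nat \<lceil>2 * Lam\<rceil>) ^ 2) ^ n"
proof -
  obtain C where C: "C > 0" "\<And>x n Bd. x \<in> {0..<1} \<Longrightarrow> Bd > 0 \<Longrightarrow>
      real (card {\<alpha>\<in>words l n. deriv (El ^^ n) (pt El x \<alpha>) \<le> Bd}) \<le> C * Bd"
    using card_words_bounded_expansion by blast
  define c where "c = real (nat \<lceil>2 * Lam\<rceil>)"
  define K1 where "K1 = C * (2 * (R / (lam - 1))) * (real l ^ q * (2 * real J))"
  define K where "K = (2 * real CARD('m)) ^ CARD('m) * K1 ^ N"
  define P where "P = real J * real (card admissible_prefixes)"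
  have x01: "x \<in> {0..<1}" if "x \<in> Tset Lam n" for x n using that unfolding Tset_def by auto
  have bad: "bad_params x \<theta> j B n \<in> sets lborel"
    "measure lborel (bad_params x \<theta> j B n) \<le> K * exp (- (2 * rho / 3) * real n) ^ N"
    if "(x, \<theta>, j, B) \<in> bad_index n" for x \<theta> j B n
    using measure_bad_params_le[OF C x01, folded K1_def] that
    unfolding bad_index_def K_def power_mult_distrib mult.assoc by auto
  have "K \<ge> 0" "P \<ge> 0" using C(1) R_pos lam_gt_1 unfolding K_def K1_def P_def by auto
  show ?thesis
  proof (rule that[of "P * K"])
    show "bad_set n \<in> sets lborel" for n
      unfolding bad_set_def using bad finite_bad_index by (intro sets.finite_UN) auto
    have "measure lborel (bad_set n) \<le> (\<Sum>p\<in>bad_index n. K * exp (- (2 * rho / 3) * real n) ^ N)" for n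
      unfolding bad_set_def using bad finite_bad_index
      by (intro order_trans[OF measure_UNION_le] sum_mono) auto
    also have "\<dots> n \<le> (c ^ n * c ^ n * P) * (K * exp (- (2 * rho / 3) * real n) ^ N)" for n
      using card_bad_index_le[of n] \<open>K \<ge> 0\<close> unfolding c_def P_def by (simp add: mult_right_mono)
    also have "\<dots> n = P * K * (c ^ n * c ^ n * exp (- (2 * rho / 3) * real n) ^ N)" for n
      by (simp only: mult_ac)
    also have "\<dots> n \<le> P * K * (1 / c ^ 2) ^ n" for n
      using grid_growth_times_decay_le[OF c_def] \<open>K \<ge> 0\<close> \<open>P \<ge> 0\<close> by (intro mult_left_mono) auto
    finally show "measure lborel (bad_set n) \<le> P * K * (1 / real (nat \<lceil>2 * Lam\<rceil>) ^ 2) ^ n" for n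
      unfolding c_def .
  qed
qed

lemma recurrent_params_null:
  "{t :: real^'m. (\<forall>i. \<bar>t $ i\<bar> \<le> 1) \<and>
      infinite {n. perturb \<tau> \<phi> t \<in> Xset El l lam Lam D R rho J a b q N n}} \<in> null_sets lebesgue"
  (is "?recurrent \<in> _")
proof -
  have "{t. infinite {n. t \<in> bad_set n}} \<in> null_sets lebesgue"
  proof (rule measure_bad_set_le)
    fix K assume "\<And>n. bad_set n \<in> sets lborel"
      and "\<And>n. measure lborel (bad_set n) \<le> K * (1 / real (nat \<lceil>2 * Lam\<rceil>) ^ 2) ^ n"
    moreover have "bad_set n \<subseteq> cbox (-1) 1" for n
      unfolding bad_set_def bad_params_def by auto
    moreover have "1 < real (nat \<lceil>2 * Lam\<rceil>) ^ 2"
      using grid_base_ge_3 by (intro one_less_power) (linarith, simp)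
    then have "1 / real (nat \<lceil>2 * Lam\<rceil>) ^ 2 < 1" by (simp add: divide_less_eq_1)
    ultimately show ?thesis by (intro infinitely_often_null_of_geometric) auto
  qed
  moreover have "?recurrent \<subseteq> {t. infinite {n. t \<in> bad_set n}}"
  proof
    fix t assume "t \<in> ?recurrent"
    then have "t \<in> cbox (-1) 1"
      and inf: "infinite {n. perturb \<tau> \<phi> t \<in> Xset El l lam Lam D R rho J a b q N n}"
      using cube_eq_cbox by auto
    then have "{n. perturb \<tau> \<phi> t \<in> Xset El l lam Lam D R rho J a b q N n} \<subseteq> {n. t \<in> bad_set n}"
      using Xset_imp_bad_set by blast
    then have "infinite {n. t \<in> bad_set n}" using inf by (rule infinite_super)
    then show "t \<in> {t. infinite {n. t \<in> bad_set n}}" by simp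
  qed
  ultimately show ?thesis by (rule null_sets_completion_subset[rotated])
qed

end

theorem mainTheorem7:
  fixes r l :: nat and lam Lam R rho :: real and El :: "real \<Rightarrow> real"
    and D :: "(real \<Rightarrow> real) set" and J q N :: nat and a b :: "nat \<Rightarrow> real"
    and \<phi> :: "'m::finite \<Rightarrow> real \<Rightarrow> real"
  assumes r: "r \<ge> 2" and l: "l \<ge> 2"
    and E: "expanding_map r l lam Lam El"
    and Dopen: "cr_open r D" and Dbdd: "cr_bounded r D"
    and R: "R > 0" and Rbd: "\<forall>\<tau>\<in>D. (SUP y. \<bar>deriv \<tau> y\<bar>) < R"
    and rho: "rho > 0"
    and cover: "{ln lam..ln Lam} \<subseteq> (\<Union>j\<in>{1..J}. {a j<..<b j})"
    and short: "\<forall>j\<in>{1..J}. b j - a j < rho / 3"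
    and N: "N = nat \<lceil>6 / rho * ln (real_of_int \<lceil>2 * Lam\<rceil>)\<rceil>"
    and q: "q \<ge> 1" and qbd: "real (q + 1) * real N * exp (- real q * rho / 2) < 1 / (4 * real J)"
    and smooth: "\<forall>i. Cinf_circle (\<phi> i)"
    and prop34: "\<forall>x\<in>{0..<1}. \<forall>B. B \<subseteq> words l q \<and> card B \<ge> N * (q + 1) \<longrightarrow>
         (\<exists>B'\<subseteq>B. card B' = N \<and>
            (\<forall>n\<ge>q. \<forall>A\<subseteq>words l n. bij_betw (trunc q) A B' \<longrightarrow>
               jac_aff A (Gmap El x A (\<lambda>_. 0) \<phi>) \<ge> 1))"
  shows "\<forall>\<tau>\<in>D. {t :: real^'m. (\<forall>i. \<bar>t $ i\<bar> \<le> 1) \<and>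
            infinite {n. perturb \<tau> \<phi> t \<in> Xset El l lam Lam D R rho J a b q N n}}
          \<in> null_sets lebesgue"
proof
  fix \<tau> assume "\<tau> \<in> D"
  then have "Ck r \<tau>" using Dopen unfolding cr_open_def Cr_circle_def by auto
  then have \<tau>: "(\<tau> has_real_derivative deriv \<tau> y) (at y)" for y
    using r by (intro Ck_has_deriv) auto
  have \<phi>: "(\<phi> i has_real_derivative deriv (\<phi> i) y) (at y)" for i y
    using smooth unfolding Cinf_circle_def Cr_circle_def by (intro Ck_has_deriv[of 1]) auto
  have "J \<ge> 1"
  proof (rule ccontr)
    assume "\<not> J \<ge> 1"
    then have "J = 0" by simp
    then have "real (q + 1) * real N * exp (- real q * rho / 2) < 0" using qbd by simp
    moreover have "0 \<le> real (q + 1) * real N * exp (- real q * rho / 2)" by simp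
    ultimately show False by linarith
  qed
  interpret recurrence_setting r l lam Lam El D R rho J q N a b \<tau> \<phi>
    using r E \<tau> \<phi> R rho \<open>J \<ge> 1\<close> short N prop34 by unfold_locales auto
  show "{t :: real^'m. (\<forall>i. \<bar>t $ i\<bar> \<le> 1) \<and>
      infinite {n. perturb \<tau> \<phi> t \<in> Xset El l lam Lam D R rho J a b q N n}} \<in> null_sets lebesgue"
    by (rule recurrent_params_null)
qed

end
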